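(* Let $\mathcal R=(\Delta^*,\Theta)$ be a word rewriting system with $\Delta=\{0,1\}$, let $\Sigma_{\mathcal R}=\Sigma_\Theta\cup\Sigma_{LR}$ be the set of tgds over schema $\{E,L,R\}$ defined below, and let $w_0\in\Delta^*$. Then the core chase sequence with $\Sigma_{\mathcal R}$ starting from $I_{w_0}$ is infinite if and only if there is an infinite derivation $w_0\rightarrow_{\mathcal R}w_1\rightarrow_{\mathcal R}w_2\rightarrow_{\mathcal R}\cdots$.
   Context: Word rewriting: $\Theta$ is a finite subset of $\Delta^*\times\Delta^*$; $u\rightarrow_{\mathcal R}v$ iff $u=x\ell y$, $v=xry$ for some $(\ell,r)\in\Theta$ and $x,y\in\Delta^*$. For $w=a_1\dots a_n\in\Delta^*$, $I_w=\{E(x_0,a_1,x_1),\dots,E(x_{n-1},a_n,x_n)\}$ with pairwise distinct nulls $x_i$. Schema: $E$ ternary, $L,R$ binary; $0,1$ are constants. $\Sigma_\Theta$ contains, for each $\rho=(a_1\dots a_n,b_1\dots b_m)\in\Theta$, the tgd $E(x_0,a_1,x_1),\dots,E(x_{n-1},a_n,x_n)\rightarrow\exists y_0\dots y_m\,L(x_0,y_0),E(y_0,b_1,y_1),\dots,E(y_{m-1},b_m,y_m),R(x_n,y_m)$. $\Sigma_{LR}$ consists of, for $c\in\{0,1\}$: $E(x_0,c,x_1),L(x_1,y_1)\rightarrow\exists y_0\,L(x_0,y_0),E(y_0,c,y_1)$ and $R(x_0,z_0),E(x_0,c,x_1)\rightarrow\exists z_1\,E(z_0,c,z_1),R(x_1,z_1)$.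 Chase: a trigger for tgd $\alpha\rightarrow\exists\bar z\beta$ on instance $I$ is a mapping $h$ (identity on constants) with $h(\alpha)\subseteq I$, active if no extension $h'$ has $h'(\beta)\subseteq I$. The core chase from $I$ repeatedly fires all active triggers in parallel (each adding $h'(\beta)$ with fresh nulls for existential variables), takes the union and replaces it by its core (minimal subinstance to which the instance maps by an endomorphism); it stops when no active trigger remains. *)

theory Defs
  imports Main
begin

datatype 't atom = E 't 't 't | L 't 't | R 't 't

text \<open>Instance terms: the constants 0 and 1 (C False, C True) and labelled nulls.\<close>
datatype "term" = C bool | N nat

datatype vterm = VC bool | V nat

type_synonym inst_db = "term atom set"
type_synonym tgd = "vterm atom list \<times> vterm atom list"  

fun app :: "(nat \<Rightarrow> term) \<Rightarrow> vterm \<Rightarrow> term" where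
  "app h (VC c) = C c"
| "app h (V x) = h x"

definition inst :: "(nat \<Rightarrow> term) \<Rightarrow> vterm atom \<Rightarrow> term atom" where
  "inst h a = map_atom (app h) a"

definition vars_of :: "vterm atom list \<Rightarrow> nat set" where
  "vars_of as = {x. V x \<in> (\<Union>a\<in>set as. set_atom a)}"

definition bvars :: "tgd \<Rightarrow> nat set" where
  "bvars \<sigma> = vars_of (fst \<sigma>)"

definition evars :: "tgd \<Rightarrow> nat set" where
  "evars \<sigma> = vars_of (snd \<sigma>) - bvars \<sigma>"

definition adom :: "inst_db \<Rightarrow> term set" where
  "adom I = (\<Union>a\<in>I. set_atom a)"

text \<open>A trigger is a tgd together with a body match; the match is canonicalised to be
  constant outside the body variables so that triggers correspond to body matches.\<close>
definition trigger :: "tgd set \<Rightarrow> inst_db \<Rightarrow> tgd \<times> (nat \<Rightarrow> term) \<Rightarrow> bool" where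
  "trigger S I t \<longleftrightarrow> fst t \<in> S \<and> (\<forall>x. x \<notin> bvars (fst t) \<longrightarrow> snd t x = C False)
      \<and> inst (snd t) ` set (fst (fst t)) \<subseteq> I"

definition active :: "tgd set \<Rightarrow> inst_db \<Rightarrow> tgd \<times> (nat \<Rightarrow> term) \<Rightarrow> bool" where
  "active S I t \<longleftrightarrow> trigger S I t \<and>
     \<not> (\<exists>h'. (\<forall>x\<in>bvars (fst t). h' x = snd t x) \<and> inst h' ` set (snd (fst t)) \<subseteq> I)"

definition hom :: "(term \<Rightarrow> term) \<Rightarrow> inst_db \<Rightarrow> inst_db \<Rightarrow> bool" where
  "hom h A B \<longleftrightarrow> (\<forall>c. h (C c) = C c) \<and> map_atom h ` A \<subseteq> B"

definition is_core_of :: "inst_db \<Rightarrow> inst_db \<Rightarrow> bool" where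
  "is_core_of K J \<longleftrightarrow> J \<subseteq> K \<and> (\<exists>h. hom h K J) \<and> (\<forall>J'. J' \<subset> J \<longrightarrow> \<not> (\<exists>h. hom h K J'))"

definition core_step :: "tgd set \<Rightarrow> inst_db \<Rightarrow> inst_db \<Rightarrow> bool" where
  "core_step S I J \<longleftrightarrow> (let T = {t. active S I t} in T \<noteq> {} \<and>
     (\<exists>f :: tgd \<times> (nat \<Rightarrow> term) \<Rightarrow> nat \<Rightarrow> term.
        (\<forall>t\<in>T. (\<forall>x\<in>bvars (fst t). f t x = snd t x)
               \<and> (\<forall>x\<in>evars (fst t). (\<exists>k. f t x = N k) \<and> f t x \<notin> adom I)
               \<and> inj_on (f t) (evars (fst t)))
      \<and> (\<forall>t\<in>T. \<forall>t'\<in>T. t \<noteq> t' \<longrightarrow> f t ` evars (fst t) \<inter> f t' ` evars (fst t') = {})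
      \<and> is_core_of (I \<union> (\<Union>t\<in>T. inst (f t) ` set (snd (fst t)))) J))"

text \<open>The core chase sequence from I0 is infinite: it never reaches an inst_db without
  active triggers (all choices of fresh nulls and cores yield isomorphic instances).\<close>
definition core_chase_infinite :: "tgd set \<Rightarrow> inst_db \<Rightarrow> bool" where
  "core_chase_infinite S I0 \<longleftrightarrow> (\<exists>seq. seq 0 = I0 \<and> (\<forall>i. core_step S (seq i) (seq (Suc i))))"

definition rewrite :: "(bool list \<times> bool list) set \<Rightarrow> bool list \<Rightarrow> bool list \<Rightarrow> bool" where
  "rewrite \<Theta> u v \<longleftrightarrow> (\<exists>x y l r. (l, r) \<in> \<Theta> \<and> u = x @ l @ y \<and> v = x @ r @ y)"

definition word_instance :: "bool list \<Rightarrow> inst_db" where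
  "word_instance w = {E (N i) (C (w ! i)) (N (Suc i)) | i. i < length w}"

text \<open>tgd for a rule (a_1..a_n, b_1..b_m): x_i = V i (i \<le> n), y_j = V (n+1+j) (j \<le> m).\<close>
definition rule_tgd :: "bool list \<times> bool list \<Rightarrow> tgd" where
  "rule_tgd \<rho> = (let l = fst \<rho>; r = snd \<rho>; n = length l; m = length r in
     ([E (V i) (VC (l ! i)) (V (Suc i)). i \<leftarrow> [0..<n]],
      [L (V 0) (V (n + 1))]
      @ [E (V (n + 1 + j)) (VC (r ! j)) (V (n + 2 + j)). j \<leftarrow> [0..<m]]
      @ [R (V n) (V (n + 1 + m))]))"

definition Sigma_Theta :: "(bool list \<times> bool list) set \<Rightarrow> tgd set" where
  "Sigma_Theta \<Theta> = rule_tgd ` \<Theta>"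

definition Sigma_LR :: "tgd set" where
  "Sigma_LR = (\<Union>c\<in>{False, True}.
     { ([E (V 0) (VC c) (V 1), L (V 1) (V 2)], [L (V 0) (V 3), E (V 3) (VC c) (V 2)]),
       ([R (V 0) (V 1), E (V 0) (VC c) (V 2)], [E (V 1) (VC c) (V 3), R (V 2) (V 3)]) })"

definition Sigma_R :: "(bool list \<times> bool list) set \<Rightarrow> tgd set" where
  "Sigma_R \<Theta> = Sigma_Theta \<Theta> \<union> Sigma_LR"

end

theory Submission
  imports Defs "HOL-Library.Countable" "HOL-Library.FuncSet"
begin

text \<open>
  If w0 has an infinite derivation, every instance of the core chase contains a path labelled w0, and
  its L-atoms are graded by a rank function, since newly created L-atoms always lead from old terms
  to fresh nulls. In a model of the tgds, the rule tgds together with the L- and R-tgds replay each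
  rewrite step on a path, with an L-edge between the starts of the old and the new path; an infinite
  derivation would thus produce an infinite L-chain in a finite graded instance. So no chase
  instance is a model and the chase never stops.

  If every derivation is finite, the tree of rewrite histories is finite by Koenig's lemma. The
  instance with one path per history, linked to the path of its parent history by L- and R-atoms,
  is then a finite model into which the chase maps. Conversely it maps into the chase, since each
  history is added by simulating one rule firing followed by L- and R-copying. A core that is
  homomorphically equivalent to a model is itself a model, so the chase stops.
\<close>

section \<open>Instantiation, homomorphisms and cores\<close>

lemma app_comp: "(\<forall>c. g (C c) = C c) \<Longrightarrow> app (g \<circ> h) v = g (app h v)"
  by (cases v) auto

lemma inst_comp: "(\<forall>c. g (C c) = C c) \<Longrightarrow> inst (g \<circ> h) a = map_atom g (inst h a)"
  unfolding inst_def by (simp add: atom.map_comp comp_def app_comp[unfolded comp_def] cong: atom.map_cong)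

lemma inst_cong: "(\<And>x. V x \<in> set_atom a \<Longrightarrow> h1 x = h2 x) \<Longrightarrow> inst h1 a = inst h2 a"
  unfolding inst_def
proof (rule atom.map_cong0)
  fix z assume z: "z \<in> set_atom a" and h: "\<And>x. V x \<in> set_atom a \<Longrightarrow> h1 x = h2 x"
  show "app h1 z = app h2 z"
  proof (cases z)
    case (V x) with z h show ?thesis by simp
  qed simp
qed

lemma var_in_inst: "V x \<in> set_atom a \<Longrightarrow> h x \<in> set_atom (inst h a)"
  unfolding inst_def by (force simp: atom.set_map)

lemma inst_E [simp]: "inst h (E a b c) = E (app h a) (app h b) (app h c)"
  and inst_L [simp]: "inst h (L a b) = L (app h a) (app h b)"
  and inst_R [simp]: "inst h (R a b) = R (app h a) (app h b)"
  by (simp_all add: inst_def)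

lemma finite_set_atom: "finite (set_atom a)"
  by (cases a) auto

lemma finite_adom: "finite I \<Longrightarrow> finite (adom I)"
  unfolding adom_def by (auto simp: finite_set_atom)

lemma adom_Un: "adom (A \<union> B) = adom A \<union> adom B"
  unfolding adom_def by auto

lemma adom_map_atom: "adom (map_atom \<phi> ` J) = \<phi> ` adom J"
  unfolding adom_def by (auto simp: atom.set_map)

lemma vars_of_eq: "vars_of as = {x. \<exists>a\<in>set as. V x \<in> set_atom a}"
  by (auto simp: vars_of_def)

lemma vars_of_simps: "vars_of (a # as) = {x. V x \<in> set_atom a} \<union> vars_of as" "vars_of [] = {}"
  by (auto simp: vars_of_def)

lemma finite_vars_of: "finite (vars_of as)"
proof -
  have "vars_of as = V -` (\<Union>a\<in>set as. set_atom a)" unfolding vars_of_def by auto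
  then show ?thesis by (simp add: finite_vimageI finite_set_atom inj_def)
qed

lemma body_var_in_adom:
  assumes "x \<in> bvars \<sigma>" "inst h ` set (fst \<sigma>) \<subseteq> I"
  shows "h x \<in> adom I"
proof -
  from assms(1) obtain a where "a \<in> set (fst \<sigma>)" "V x \<in> set_atom a"
    unfolding bvars_def vars_of_def by auto
  with assms(2) show ?thesis unfolding adom_def by (blast intro: var_in_inst)
qed

lemma inst_cong_body:
  assumes "a \<in> set (fst \<sigma>)" "\<And>x. x \<in> bvars \<sigma> \<Longrightarrow> h1 x = h2 x"
  shows "inst h1 a = inst h2 a"
  using assms by (intro inst_cong) (auto simp: bvars_def vars_of_def)

lemma head_var_cases:
  assumes "a \<in> set (snd \<sigma>)" "V x \<in> set_atom a"
  shows "x \<in> bvars \<sigma> \<or> x \<in> evars \<sigma>"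
  using assms by (auto simp: evars_def vars_of_def)

lemma map_atom_cong_adom:
  assumes "a \<in> I" "\<And>z. z \<in> adom I \<Longrightarrow> g' z = g z"
  shows "map_atom g' a = map_atom g a"
proof (rule atom.map_cong0)
  fix z assume "z \<in> set_atom a"
  with assms show "g' z = g z" unfolding adom_def by blast
qed

lemma hom_id: "hom id K K"
  unfolding hom_def by (simp add: atom.map_id)

lemma hom_comp: "hom g A B \<Longrightarrow> B \<subseteq> K \<Longrightarrow> hom c K J \<Longrightarrow> hom (c \<circ> g) A J"
  unfolding hom_def by (simp add: image_subset_iff atom.map_comp[symmetric]) blast

lemma hom_subset: "hom g A B \<Longrightarrow> A' \<subseteq> A \<Longrightarrow> hom g A' B"
  unfolding hom_def by blast

lemma hom_inst_image:
  assumes "hom g A B" "inst h ` X \<subseteq> A"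
  shows "inst (g \<circ> h) ` X \<subseteq> B"
proof -
  have "\<forall>c. g (C c) = C c" using assms(1) unfolding hom_def by blast
  with assms show ?thesis unfolding hom_def by (auto simp: inst_comp)
qed

lemma core_exists:
  assumes "finite K" shows "\<exists>J. is_core_of K J"
proof -
  let ?P = "\<lambda>J. J \<subseteq> K \<and> (\<exists>h. hom h K J)"
  have "?P K" using hom_id by blast
  then obtain J where J: "?P J" and min: "\<And>J'. ?P J' \<Longrightarrow> card J \<le> card J'"
    using ex_has_least_nat[of ?P K card] by blast
  have "finite J" using J assms by (blast intro: finite_subset)
  then have "\<not> (\<exists>h. hom h K J')" if "J' \<subset> J" for J'
    using that J min[of J'] psubset_card_mono[of J J'] by auto
  then show ?thesis using J unfolding is_core_of_def by blast
qed

lemma core_endomorphism_invertible: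
  assumes c: "is_core_of K J" and fJ: "finite J" and h\<phi>: "hom \<phi> J J"
  obtains \<psi> where "hom \<psi> J J" "\<And>z. z \<in> adom J \<Longrightarrow> \<psi> (\<phi> z) = z"
proof -
  have \<phi>C: "\<forall>c. \<phi> (C c) = C c" using h\<phi> unfolding hom_def by blast
  obtain hc where "hom hc K J" using c unfolding is_core_of_def by blast
  moreover have "hom \<phi> J (map_atom \<phi> ` J)" unfolding hom_def using \<phi>C by blast
  ultimately have "hom (\<phi> \<circ> hc) K (map_atom \<phi> ` J)" by (rule hom_comp[OF _ order_refl])
  moreover have "map_atom \<phi> ` J \<subseteq> J" using h\<phi> unfolding hom_def by blast
  ultimately have JJ: "map_atom \<phi> ` J = J" using c unfolding is_core_of_def by blast
  then have surj: "\<phi> ` adom J = adom J" by (metis adom_map_atom)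
  then have inj: "inj_on \<phi> (adom J)" using finite_adom[OF fJ] by (simp add: finite_surj_inj)
  define \<psi> where "\<psi> z = (if z \<in> adom J then inv_into (adom J) \<phi> z else z)" for z
  have \<psi>\<phi>: "\<psi> (\<phi> z) = z" if "z \<in> adom J" for z
    using that inj surj unfolding \<psi>_def by (auto simp: inv_into_f_f)
  have "\<psi> (C c) = C c" for c
    using \<psi>\<phi>[of "C c"] \<phi>C by (cases "C c \<in> adom J") (auto simp: \<psi>_def)
  moreover have "map_atom \<psi> b \<in> J" if "b \<in> J" for b
  proof -
    from that JJ obtain b' where b': "b' \<in> J" "b = map_atom \<phi> b'" by blast
    have "map_atom \<psi> b = map_atom (\<psi> \<circ> \<phi>) b'" by (simp add: b' atom.map_comp)
    also have "\<dots> = map_atom id b'" by (rule map_atom_cong_adom[OF b'(1)]) (simp add: \<psi>\<phi>)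
    finally show ?thesis using b' by (simp add: atom.map_id)
  qed
  ultimately have "hom \<psi> J J" unfolding hom_def by blast
  then show ?thesis using that \<psi>\<phi> by blast
qed

section \<open>Models and core chase steps\<close>

definition model :: "tgd set \<Rightarrow> inst_db \<Rightarrow> bool" where
  "model S I \<longleftrightarrow> (\<forall>\<sigma>\<in>S. \<forall>h. inst h ` set (fst \<sigma>) \<subseteq> I \<longrightarrow>
      (\<exists>h'. (\<forall>x\<in>bvars \<sigma>. h' x = h x) \<and> inst h' ` set (snd \<sigma>) \<subseteq> I))"

definition fresh_firing :: "tgd set \<Rightarrow> inst_db \<Rightarrow> (tgd \<times> (nat \<Rightarrow> term) \<Rightarrow> nat \<Rightarrow> term) \<Rightarrow> bool" where
  "fresh_firing S I f \<longleftrightarrow>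
     (\<forall>t\<in>{t. active S I t}. (\<forall>x\<in>bvars (fst t). f t x = snd t x)
        \<and> (\<forall>x\<in>evars (fst t). (\<exists>k. f t x = N k) \<and> f t x \<notin> adom I)
        \<and> inj_on (f t) (evars (fst t)))
   \<and> (\<forall>t\<in>{t. active S I t}. \<forall>t'\<in>{t. active S I t}. t \<noteq> t' \<longrightarrow>
        f t ` evars (fst t) \<inter> f t' ` evars (fst t') = {})"

definition fire_all :: "tgd set \<Rightarrow> inst_db \<Rightarrow> (tgd \<times> (nat \<Rightarrow> term) \<Rightarrow> nat \<Rightarrow> term) \<Rightarrow> inst_db" where
  "fire_all S I f = I \<union> (\<Union>t\<in>{t. active S I t}. inst (f t) ` set (snd (fst t)))"

lemma fresh_firingD:
  assumes "fresh_firing S I f" "active S I t"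
  shows "\<forall>x\<in>bvars (fst t). f t x = snd t x"
    and "\<forall>x\<in>evars (fst t). (\<exists>k. f t x = N k) \<and> f t x \<notin> adom I"
    and "inj_on (f t) (evars (fst t))"
    and "\<And>t'. active S I t' \<Longrightarrow> t \<noteq> t' \<Longrightarrow> f t ` evars (fst t) \<inter> f t' ` evars (fst t') = {}"
proof -
  note F = assms(1)[unfolded fresh_firing_def]
  have t: "t \<in> {t. active S I t}" using assms(2) by simp
  note T = bspec[OF conjunct1[OF F] t]
  show "\<forall>x\<in>bvars (fst t). f t x = snd t x" by (rule conjunct1[OF T])
  show "\<forall>x\<in>evars (fst t). (\<exists>k. f t x = N k) \<and> f t x \<notin> adom I" by (rule conjunct1[OF conjunct2[OF T]])
  show "inj_on (f t) (evars (fst t))" by (rule conjunct2[OF conjunct2[OF T]])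
  fix t' assume "active S I t'" "t \<noteq> t'"
  then have "t' \<in> {t. active S I t}" "t \<noteq> t'" by simp_all
  then show "f t ` evars (fst t) \<inter> f t' ` evars (fst t') = {}"
    using bspec[OF bspec[OF conjunct2[OF F] t]] by blast
qed

lemma core_step_iff:
  "core_step S I J \<longleftrightarrow> (\<exists>t. active S I t) \<and> (\<exists>f. fresh_firing S I f \<and> is_core_of (fire_all S I f) J)"
  unfolding core_step_def fresh_firing_def fire_all_def Let_def conj_assoc
  by (simp only: Collect_empty_eq not_all not_not)

lemma active_trigger: "active S I t \<Longrightarrow> fst t \<in> S \<and> inst (snd t) ` set (fst (fst t)) \<subseteq> I"
  unfolding active_def trigger_def by blast

definition body_restrict :: "tgd \<Rightarrow> (nat \<Rightarrow> term) \<Rightarrow> nat \<Rightarrow> term" where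
  "body_restrict \<sigma> h x = (if x \<in> bvars \<sigma> then h x else C False)"

lemma body_restrict_bvar [simp]: "x \<in> bvars \<sigma> \<Longrightarrow> body_restrict \<sigma> h x = h x"
  by (simp add: body_restrict_def)

lemma trigger_body_restrict:
  assumes "\<sigma> \<in> S" "inst h ` set (fst \<sigma>) \<subseteq> I"
  shows "trigger S I (\<sigma>, body_restrict \<sigma> h)"
proof -
  have "inst (body_restrict \<sigma> h) a = inst h a" if "a \<in> set (fst \<sigma>)" for a
    using that by (rule inst_cong_body) simp
  with assms show ?thesis unfolding trigger_def by (auto simp: body_restrict_def)
qed

lemma inactive_body_restrict:
  assumes "\<sigma> \<in> S" "inst h ` set (fst \<sigma>) \<subseteq> I" "\<not> active S I (\<sigma>, body_restrict \<sigma> h)"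
  shows "\<exists>h'. (\<forall>x\<in>bvars \<sigma>. h' x = h x) \<and> inst h' ` set (snd \<sigma>) \<subseteq> I"
proof -
  have "\<exists>h'. (\<forall>x\<in>bvars \<sigma>. h' x = body_restrict \<sigma> h x) \<and> inst h' ` set (snd \<sigma>) \<subseteq> I"
    using assms(3) trigger_body_restrict[OF assms(1,2)] unfolding active_def by (metis fst_conv snd_conv)
  then show ?thesis by simp
qed

lemma model_iff_no_active: "model S I \<longleftrightarrow> (\<forall>t. \<not> active S I t)"
proof
  show "model S I \<Longrightarrow> \<forall>t. \<not> active S I t"
    unfolding model_def active_def trigger_def by (metis prod.collapse)
next
  assume "\<forall>t. \<not> active S I t"
  then show "model S I" unfolding model_def by (blast intro: inactive_body_restrict)
qed

lemma model_no_core_step: "model S I \<Longrightarrow> \<not> core_step S I J"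
  by (simp add: core_step_iff model_iff_no_active)

lemma subset_fire_all: "I \<subseteq> fire_all S I f"
  unfolding fire_all_def by (rule Un_upper1)

lemma fire_all_satisfies:
  assumes "fresh_firing S I f" "\<sigma> \<in> S" "inst h ` set (fst \<sigma>) \<subseteq> I"
  shows "\<exists>h'. (\<forall>x\<in>bvars \<sigma>. h' x = h x) \<and> inst h' ` set (snd \<sigma>) \<subseteq> fire_all S I f"
proof (cases "active S I (\<sigma>, body_restrict \<sigma> h)")
  case True
  let ?t = "(\<sigma>, body_restrict \<sigma> h)"
  have "\<forall>x\<in>bvars (fst ?t). f ?t x = snd ?t x" by (rule fresh_firingD(1)[OF assms(1) True])
  then have "\<forall>x\<in>bvars \<sigma>. f ?t x = h x" by simp
  moreover have "inst (f ?t) ` set (snd (fst ?t)) \<subseteq> fire_all S I f"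
    using True unfolding fire_all_def by blast
  ultimately show ?thesis by auto
next
  case False
  then obtain h' where "\<forall>x\<in>bvars \<sigma>. h' x = h x" "inst h' ` set (snd \<sigma>) \<subseteq> I"
    using inactive_body_restrict[OF assms(2,3)] by blast
  then show ?thesis using subset_fire_all by blast
qed

lemma core_stepE:
  assumes "core_step S I J"
  obtains K where "is_core_of K J" "I \<subseteq> K"
    "\<And>\<sigma> h. \<sigma> \<in> S \<Longrightarrow> inst h ` set (fst \<sigma>) \<subseteq> I \<Longrightarrow>
       \<exists>h'. (\<forall>x\<in>bvars \<sigma>. h' x = h x) \<and> inst h' ` set (snd \<sigma>) \<subseteq> K"
proof -
  from assms have "\<exists>f. fresh_firing S I f \<and> is_core_of (fire_all S I f) J"
    unfolding core_step_iff by (rule conjunct2)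
  then obtain f where f: "fresh_firing S I f" "is_core_of (fire_all S I f) J" by blast
  show ?thesis
    by (rule that[OF f(2) subset_fire_all fire_all_satisfies[OF f(1)]])
qed

lemma finite_matches:
  assumes "finite A" "finite B"
  shows "finite {h. (\<forall>x. x \<notin> B \<longrightarrow> h x = C False) \<and> (\<forall>x\<in>B. h x \<in> A)}"
proof -
  let ?H = "{h. (\<forall>x. x \<notin> B \<longrightarrow> h x = C False) \<and> (\<forall>x\<in>B. h x \<in> A)}"
  have inj: "inj_on (\<lambda>h. restrict h B) ?H"
  proof (rule inj_onI)
    fix h1 h2 assume h: "h1 \<in> ?H" "h2 \<in> ?H" and eq: "restrict h1 B = restrict h2 B"
    have "h1 x = h2 x" for x
    proof (cases "x \<in> B")
      case True
      then show ?thesis using fun_cong[OF eq, of x] by simp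
    next
      case False
      then show ?thesis using h by simp
    qed
    then show "h1 = h2" by (rule ext)
  qed
  have "(\<lambda>h. restrict h B) ` ?H \<subseteq> (\<Pi>\<^sub>E x\<in>B. A)" by auto
  moreover have "finite (\<Pi>\<^sub>E x\<in>B. A)" using assms by (intro finite_PiE) auto
  ultimately have "finite ((\<lambda>h. restrict h B) ` ?H)" by (rule finite_subset)
  then show ?thesis using inj by (rule finite_imageD)
qed

lemma finite_active:
  assumes S: "finite S" and I: "finite I"
  shows "finite {t. active S I t}"
proof -
  define Hs where "Hs \<sigma> = {h. (\<forall>x. x \<notin> bvars \<sigma> \<longrightarrow> h x = C False) \<and> (\<forall>x\<in>bvars \<sigma>. h x \<in> adom I)}" for \<sigma>
  have "{t. active S I t} \<subseteq> (\<Union>\<sigma>\<in>S. Pair \<sigma> ` Hs \<sigma>)"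
  proof
    fix t assume "t \<in> {t. active S I t}"
    then have tr: "trigger S I t" by (simp add: active_def)
    obtain \<sigma> h where t: "t = (\<sigma>, h)" by (cases t)
    have b: "inst h ` set (fst \<sigma>) \<subseteq> I" and "\<forall>x. x \<notin> bvars \<sigma> \<longrightarrow> h x = C False"
      using tr unfolding t trigger_def by auto
    then have "h \<in> Hs \<sigma>" unfolding Hs_def using body_var_in_adom[OF _ b] by blast
    then show "t \<in> (\<Union>\<sigma>\<in>S. Pair \<sigma> ` Hs \<sigma>)" using tr unfolding t trigger_def by auto
  qed
  moreover have "finite (Hs \<sigma>)" for \<sigma>
    unfolding Hs_def using finite_adom[OF I] by (rule finite_matches) (simp add: bvars_def finite_vars_of)
  then have "finite (\<Union>\<sigma>\<in>S. Pair \<sigma> ` Hs \<sigma>)" using S by blast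
  ultimately show ?thesis by (rule finite_subset)
qed

lemma finite_fire_all: "finite S \<Longrightarrow> finite I \<Longrightarrow> finite (fire_all S I f)"
  unfolding fire_all_def using finite_active by blast

lemma finite_core_step:
  assumes "finite S" "finite I" "core_step S I J"
  shows "finite J"
proof -
  from assms(3) have "\<exists>f. fresh_firing S I f \<and> is_core_of (fire_all S I f) J"
    unfolding core_step_iff by (rule conjunct2)
  then obtain f where "J \<subseteq> fire_all S I f" unfolding is_core_of_def by blast
  then show ?thesis using finite_fire_all[OF assms(1,2)] by (rule finite_subset)
qed

lemma core_step_exists:
  assumes S: "finite S" and I: "finite I" and act: "\<exists>t. active S I t"
  shows "\<exists>J. core_step S I J"
proof -
  define T where "T = {t. active S I t}"
  obtain e :: "tgd \<times> (nat \<Rightarrow> term) \<Rightarrow> nat" where e: "inj_on e T"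
    using finite_imp_inj_to_nat_seg[OF finite_active[OF S I]] unfolding T_def by blast
  have "finite (N -` adom I)" using finite_adom[OF I] by (rule finite_vimageI) (simp add: inj_def)
  then obtain M where M: "\<And>k. N k \<in> adom I \<Longrightarrow> k < M"
    unfolding finite_nat_set_iff_bounded by auto
  text \<open>Each existential variable gets its own null, numbered above all nulls of I.\<close>
  define f where "f t x = (if x \<in> bvars (fst t) then snd t x else N (M + prod_encode (e t, x)))" for t x
  have "(\<forall>x\<in>bvars (fst t). f t x = snd t x)
      \<and> (\<forall>x\<in>evars (fst t). (\<exists>k. f t x = N k) \<and> f t x \<notin> adom I)
      \<and> inj_on (f t) (evars (fst t))" for t
  proof -
    have "f t x \<notin> adom I" if "x \<in> evars (fst t)" for x
      using that M unfolding f_def evars_def by auto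
    moreover have "inj_on (f t) (evars (fst t))" by (rule inj_onI) (auto simp: f_def evars_def)
    ultimately show ?thesis by (auto simp: f_def evars_def)
  qed
  moreover have "f t ` evars (fst t) \<inter> f t' ` evars (fst t') = {}"
    if "t \<in> {t. active S I t}" "t' \<in> {t. active S I t}" "t \<noteq> t'" for t t'
  proof -
    from that have "e t \<noteq> e t'" using e unfolding T_def by (meson inj_on_def)
    then show ?thesis by (auto simp: f_def evars_def)
  qed
  ultimately have ff: "fresh_firing S I f" unfolding fresh_firing_def by blast
  obtain J where "is_core_of (fire_all S I f) J"
    using core_exists[OF finite_fire_all[OF S I]] by blast
  with act ff have "core_step S I J" unfolding core_step_iff by blast
  then show ?thesis ..
qed

lemma model_retract:
  assumes m: "model S U" and he: "hom e J U" and hr: "hom r U J"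
    and re: "\<And>z. z \<in> adom J \<Longrightarrow> r (e z) = z"
  shows "model S J"
  unfolding model_def
proof (intro ballI allI impI)
  fix \<sigma> h assume s: "\<sigma> \<in> S" and b: "inst h ` set (fst \<sigma>) \<subseteq> J"
  from m[unfolded model_def, rule_format, OF s hom_inst_image[OF he b]] obtain h1 where
    h1: "\<forall>x\<in>bvars \<sigma>. h1 x = (e \<circ> h) x" "inst h1 ` set (snd \<sigma>) \<subseteq> U" by blast
  have "\<forall>x\<in>bvars \<sigma>. (r \<circ> h1) x = h x" using h1(1) re body_var_in_adom[OF _ b] by simp
  moreover have "inst (r \<circ> h1) ` set (snd \<sigma>) \<subseteq> J" by (rule hom_inst_image[OF hr h1(2)])
  ultimately show "\<exists>h'. (\<forall>x\<in>bvars \<sigma>. h' x = h x) \<and> inst h' ` set (snd \<sigma>) \<subseteq> J" by blast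
qed

lemma core_hom_equiv_model:
  assumes c: "is_core_of K J" and fJ: "finite J" and m: "model S U"
    and he: "hom e J U" and hu: "hom u U J"
  shows "model S J"
proof -
  have "hom (u \<circ> e) J J" by (rule hom_comp[OF he order_refl hu])
  then obtain \<psi> where h\<psi>: "hom \<psi> J J" and \<psi>: "\<And>z. z \<in> adom J \<Longrightarrow> \<psi> ((u \<circ> e) z) = z"
    using core_endomorphism_invertible[OF c fJ] by blast
  have "hom (\<psi> \<circ> u) U J" by (rule hom_comp[OF hu order_refl h\<psi>])
  then show ?thesis by (rule model_retract[OF m he]) (use \<psi> in simp)
qed

lemma fresh_firing_nulls_distinct:
  assumes ff: "fresh_firing S I f" and t: "active S I t" "x \<in> evars (fst t)"
    and t': "active S I t'" "x' \<in> evars (fst t')" and eq: "f t x = f t' x'"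
  shows "t = t' \<and> x = x'"
proof -
  have "t = t'" using fresh_firingD(4)[OF ff t(1) t'(1)] t(2) t'(2) eq by blast
  moreover from this have "x = x'" using fresh_firingD(3)[OF ff t(1)] eq t(2) t'(2) by (simp add: inj_on_eq_iff)
  ultimately show ?thesis ..
qed

lemma map_atom_inst_head:
  assumes gC: "\<forall>c. g (C c) = C c" and b: "b \<in> set (snd \<sigma>)"
    and agree: "\<And>x. x \<in> bvars \<sigma> \<or> x \<in> evars \<sigma> \<Longrightarrow> g (h x) = W x"
  shows "map_atom g (inst h b) = inst W b"
proof -
  have "inst (g \<circ> h) b = inst W b"
    by (rule inst_cong) (use head_var_cases[OF b] agree in auto)
  then show ?thesis using inst_comp[OF gC] by simp
qed

lemma fresh_nulls_assignable:
  assumes ff: "fresh_firing S I f" and gC: "\<forall>c. g (C c) = C c"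
  obtains g' where "\<forall>c. g' (C c) = C c" "\<And>z. z \<in> adom I \<Longrightarrow> g' z = g z"
    "\<And>t x. active S I t \<Longrightarrow> x \<in> evars (fst t) \<Longrightarrow> g' (f t x) = W t x"
proof -
  define P where "P z p \<longleftrightarrow> active S I (fst p) \<and> snd p \<in> evars (fst (fst p)) \<and> f (fst p) (snd p) = z" for z p
  define g' where "g' z = (if z \<in> adom I then g z
      else if \<exists>p. P z p then W (fst (SOME p. P z p)) (snd (SOME p. P z p)) else z)" for z
  have "g' (f t x) = W t x" if t: "active S I t" and x: "x \<in> evars (fst t)" for t x
  proof -
    have "f t x \<notin> adom I" using fresh_firingD(2)[OF ff t] x by blast
    moreover have "P (f t x) (t, x)" unfolding P_def using t x by simp
    moreover have "p = (t, x)" if "P (f t x) p" for p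
    proof -
      obtain t' x' where p: "p = (t', x')" by (cases p)
      with that have "active S I t'" "x' \<in> evars (fst t')" "f t x = f t' x'" unfolding P_def by auto
      with fresh_firing_nulls_distinct[OF ff t x] show ?thesis using p by simp
    qed
    ultimately show ?thesis unfolding g'_def by (metis fst_conv snd_conv someI)
  qed
  moreover have "g' (C c) = C c" for c
  proof -
    have "\<not> P (C c) p" for p
    proof
      assume "P (C c) p"
      then have "active S I (fst p)" "snd p \<in> evars (fst (fst p))" "f (fst p) (snd p) = C c"
        unfolding P_def by auto
      with fresh_firingD(2)[OF ff this(1)] show False by fastforce
    qed
    then show ?thesis unfolding g'_def using gC by auto
  qed
  ultimately show ?thesis using that[of g'] by (simp add: g'_def)
qed

lemma fire_all_hom_to_model:
  assumes m: "model S U" and ff: "fresh_firing S I f" and hg: "hom g I U"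
  shows "\<exists>g'. hom g' (fire_all S I f) U"
proof -
  have gC: "\<forall>c. g (C c) = C c" using hg unfolding hom_def by blast
  have exW: "\<exists>h1. (\<forall>x\<in>bvars (fst t). h1 x = g (snd t x)) \<and> inst h1 ` set (snd (fst t)) \<subseteq> U"
    if "active S I t" for t
  proof -
    from active_trigger[OF that] have "fst t \<in> S" "inst (snd t) ` set (fst (fst t)) \<subseteq> I" by auto
    from m[unfolded model_def, rule_format, OF this(1) hom_inst_image[OF hg this(2)]] show ?thesis by simp
  qed
  define W where "W t = (SOME h1. (\<forall>x\<in>bvars (fst t). h1 x = g (snd t x)) \<and> inst h1 ` set (snd (fst t)) \<subseteq> U)" for t
  have W: "(\<forall>x\<in>bvars (fst t). W t x = g (snd t x)) \<and> inst (W t) ` set (snd (fst t)) \<subseteq> U"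
    if "active S I t" for t
    unfolding W_def by (rule someI_ex[OF exW[OF that]])
  obtain g' where g'C: "\<forall>c. g' (C c) = C c" and old: "\<And>z. z \<in> adom I \<Longrightarrow> g' z = g z"
    and new: "\<And>t x. active S I t \<Longrightarrow> x \<in> evars (fst t) \<Longrightarrow> g' (f t x) = W t x"
    using fresh_nulls_assignable[OF ff gC] by blast
  have "map_atom g' a \<in> U" if a: "a \<in> fire_all S I f" for a
  proof (cases "a \<in> I")
    case True
    then have "map_atom g' a = map_atom g a" by (rule map_atom_cong_adom) (rule old)
    then show ?thesis using True hg unfolding hom_def by auto
  next
    case False
    with a obtain t b where t: "active S I t" and b: "b \<in> set (snd (fst t))" and ab: "a = inst (f t) b"
      unfolding fire_all_def by blast
    have "g' (f t x) = W t x" if "x \<in> bvars (fst t) \<or> x \<in> evars (fst t)" for x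
    proof (cases "x \<in> bvars (fst t)")
      case True
      then have "f t x = snd t x" using fresh_firingD(1)[OF ff t] by blast
      moreover have "snd t x \<in> adom I" using body_var_in_adom[OF True] active_trigger[OF t] by blast
      ultimately show ?thesis using W[OF t] True old by simp
    qed (use that new[OF t] in blast)
    then have "map_atom g' a = inst (W t) b" unfolding ab by (rule map_atom_inst_head[OF g'C b])
    then show ?thesis using W[OF t] b by blast
  qed
  then have "hom g' (fire_all S I f) U" unfolding hom_def using g'C by blast
  then show ?thesis by blast
qed

lemma core_step_hom_to_model:
  assumes "model S U" "core_step S I J" "hom g I U"
  shows "\<exists>g'. hom g' J U"
proof -
  from assms(2) have "\<exists>f. fresh_firing S I f \<and> is_core_of (fire_all S I f) J"
    unfolding core_step_iff by (rule conjunct2)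
  then obtain f where "fresh_firing S I f" "J \<subseteq> fire_all S I f" unfolding is_core_of_def by blast
  with fire_all_hom_to_model[OF assms(1) _ assms(3)] show ?thesis by (blast intro: hom_subset)
qed

lemma hom_extend_firing:
  assumes hg: "hom g A K" and body: "inst h ` set (fst \<sigma>) \<subseteq> A" and agree: "\<forall>x\<in>bvars \<sigma>. h' x = h x"
    and fresh: "\<forall>x\<in>evars \<sigma>. h' x \<notin> adom A \<and> (\<exists>n. h' x = N n)" and inj: "inj_on h' (evars \<sigma>)"
    and h2: "\<forall>x\<in>bvars \<sigma>. h2 x = g (h x)" "inst h2 ` set (snd \<sigma>) \<subseteq> K"
  shows "\<exists>g'. hom g' (A \<union> inst h' ` set (snd \<sigma>)) K"
proof -
  have gC: "\<forall>c. g (C c) = C c" using hg unfolding hom_def by blast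
  define g' where "g' z = (if z \<in> adom A then g z
      else if z \<in> h' ` evars \<sigma> then h2 (inv_into (evars \<sigma>) h' z) else z)" for z
  have g'C: "\<forall>c. g' (C c) = C c"
  proof
    fix c
    have "C c \<notin> h' ` evars \<sigma>" using fresh by fastforce
    then show "g' (C c) = C c" unfolding g'_def using gC by auto
  qed
  have "map_atom g' a \<in> K" if a: "a \<in> A \<union> inst h' ` set (snd \<sigma>)" for a
  proof (cases "a \<in> A")
    case True
    then have "map_atom g' a = map_atom g a" by (rule map_atom_cong_adom) (simp add: g'_def)
    then show ?thesis using True hg unfolding hom_def by auto
  next
    case False
    with a obtain b where b: "b \<in> set (snd \<sigma>)" and ab: "a = inst h' b" by blast
    have "g' (h' x) = h2 x" if "x \<in> bvars \<sigma> \<or> x \<in> evars \<sigma>" for x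
    proof (cases "x \<in> bvars \<sigma>")
      case True
      then have "h x \<in> adom A" by (rule body_var_in_adom[OF _ body])
      then show ?thesis using True agree h2(1) by (simp add: g'_def)
    next
      case False
      with that have "x \<in> evars \<sigma>" by blast
      moreover from this have "h' x \<notin> adom A" using fresh by blast
      ultimately show ?thesis using inj by (simp add: g'_def inv_into_f_f)
    qed
    then have "map_atom g' a = inst h2 b" unfolding ab by (rule map_atom_inst_head[OF g'C b])
    then show ?thesis using h2(2) b by blast
  qed
  then show ?thesis unfolding hom_def using g'C by blast
qed

lemma core_step_absorbs_firing:
  assumes st: "core_step S I J" and hg: "hom g A I" and s: "\<sigma> \<in> S"
    and body: "inst h ` set (fst \<sigma>) \<subseteq> A" and agree: "\<forall>x\<in>bvars \<sigma>. h' x = h x"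
    and fresh: "\<forall>x\<in>evars \<sigma>. h' x \<notin> adom A \<and> (\<exists>n. h' x = N n)" and inj: "inj_on h' (evars \<sigma>)"
  shows "\<exists>g'. hom g' (A \<union> inst h' ` set (snd \<sigma>)) J"
proof -
  obtain K where c: "is_core_of K J" and IK: "I \<subseteq> K" and sat: "\<And>\<sigma> h. \<sigma> \<in> S \<Longrightarrow>
      inst h ` set (fst \<sigma>) \<subseteq> I \<Longrightarrow> \<exists>h2. (\<forall>x\<in>bvars \<sigma>. h2 x = h x) \<and> inst h2 ` set (snd \<sigma>) \<subseteq> K"
    using core_stepE[OF st] by blast
  obtain h2 where h2: "\<forall>x\<in>bvars \<sigma>. h2 x = (g \<circ> h) x" "inst h2 ` set (snd \<sigma>) \<subseteq> K"
    using sat[OF s hom_inst_image[OF hg body]] by blast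
  have "hom g A K" using hg IK unfolding hom_def by blast
  from hom_extend_firing[OF this body agree fresh inj _ h2(2)] h2(1)
  obtain g' where "hom g' (A \<union> inst h' ` set (snd \<sigma>)) K" by auto
  moreover obtain hc where "hom hc K J" using c unfolding is_core_of_def by blast
  ultimately show ?thesis using hom_comp[OF _ order_refl] by blast
qed

definition maps_into_chase :: "(nat \<Rightarrow> inst_db) \<Rightarrow> inst_db \<Rightarrow> bool" where
  "maps_into_chase seq A \<longleftrightarrow> (\<exists>k g. hom g A (seq k))"

lemma maps_into_chase_subset: "maps_into_chase seq B \<Longrightarrow> A \<subseteq> B \<Longrightarrow> maps_into_chase seq A"
  unfolding maps_into_chase_def using hom_subset by blast

lemma maps_into_chase_fire:
  assumes seq: "\<forall>i. core_step S (seq i) (seq (Suc i))" and mA: "maps_into_chase seq A" and s: "\<sigma> \<in> S"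
    and body: "inst h ` set (fst \<sigma>) \<subseteq> A" and agree: "\<forall>x\<in>bvars \<sigma>. h' x = h x"
    and fresh: "\<forall>x\<in>evars \<sigma>. h' x \<notin> adom A \<and> (\<exists>n. h' x = N n)" and inj: "inj_on h' (evars \<sigma>)"
  shows "maps_into_chase seq (A \<union> inst h' ` set (snd \<sigma>))"
proof -
  obtain k g where "hom g A (seq k)" using mA unfolding maps_into_chase_def by blast
  from core_step_absorbs_firing[OF seq[rule_format, of k] this s body agree fresh inj]
  show ?thesis unfolding maps_into_chase_def by blast
qed

lemma core_chase_finite:
  assumes "finite S" "finite (seq 0)" "\<forall>i. core_step S (seq i) (seq (Suc i))"
  shows "finite (seq i)"
  by (induction i) (use assms finite_core_step in blast)+

lemma core_chase_hom_to_model: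
  assumes "model S U" "hom e (seq 0) U" "\<forall>i. core_step S (seq i) (seq (Suc i))"
  shows "\<exists>e. hom e (seq i) U"
  by (induction i) (use assms core_step_hom_to_model in blast)+

text \<open>If U maps into the member seq k, the core seq (Suc k) is homomorphically equivalent to the
  model U and hence itself a model.\<close>
lemma core_chase_model_equivalent_stops:
  assumes S: "finite S" and fin0: "finite (seq 0)" and seq: "\<forall>i. core_step S (seq i) (seq (Suc i))"
    and m: "model S U" and e0: "hom e0 (seq 0) U" and mU: "maps_into_chase seq U"
  shows False
proof -
  obtain k u where hu: "hom u U (seq k)" using mU unfolding maps_into_chase_def by blast
  obtain K where cK: "is_core_of K (seq (Suc k))" and kK: "seq k \<subseteq> K"
    using core_stepE[OF seq[rule_format, of k]] by metis
  obtain hc where "hom hc K (seq (Suc k))" using cK unfolding is_core_of_def by blast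
  then have hu': "hom (hc \<circ> u) U (seq (Suc k))" by (rule hom_comp[OF hu kK])
  obtain e where he: "hom e (seq (Suc k)) U" using core_chase_hom_to_model[OF m e0 seq] by blast
  have "model S (seq (Suc k))"
    by (rule core_hom_equiv_model[OF cK core_chase_finite[OF S fin0 seq] m he hu'])
  then show False using model_no_core_step seq by blast
qed

section \<open>The tgds encoding the rewriting system\<close>

definition ltgd :: "bool \<Rightarrow> tgd" where
  "ltgd c = ([E (V 0) (VC c) (V 1), L (V 1) (V 2)], [L (V 0) (V 3), E (V 3) (VC c) (V 2)])"

definition rtgd :: "bool \<Rightarrow> tgd" where
  "rtgd c = ([R (V 0) (V 1), E (V 0) (VC c) (V 2)], [E (V 1) (VC c) (V 3), R (V 2) (V 3)])"

lemma range_bool: "range f = {f False, f True}"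
  by (simp add: UNIV_bool)

lemma Sigma_LR_eq: "Sigma_LR = range ltgd \<union> range rtgd"
  unfolding Sigma_LR_def ltgd_def rtgd_def range_bool by auto

lemma finite_Sigma_R: "finite \<Theta> \<Longrightarrow> finite (Sigma_R \<Theta>)"
  unfolding Sigma_R_def Sigma_Theta_def Sigma_LR_eq range_bool by simp

lemma Sigma_R_cases:
  assumes "\<sigma> \<in> Sigma_R \<Theta>"
  obtains (rule) l r where "(l, r) \<in> \<Theta>" "\<sigma> = rule_tgd (l, r)"
    | (left) c where "\<sigma> = ltgd c"
    | (right) c where "\<sigma> = rtgd c"
  using assms unfolding Sigma_R_def Sigma_Theta_def Sigma_LR_eq by auto

lemma rule_tgd_in_Sigma_R: "(l, r) \<in> \<Theta> \<Longrightarrow> rule_tgd (l, r) \<in> Sigma_R \<Theta>"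
  and ltgd_in_Sigma_R: "ltgd c \<in> Sigma_R \<Theta>"
  and rtgd_in_Sigma_R: "rtgd c \<in> Sigma_R \<Theta>"
  by (simp_all add: Sigma_R_def Sigma_Theta_def Sigma_LR_eq)

lemma bvars_ltgd: "bvars (ltgd c) = {0, 1, 2}" and evars_ltgd: "evars (ltgd c) = {3}"
  and bvars_rtgd: "bvars (rtgd c) = {0, 1, 2}" and evars_rtgd: "evars (rtgd c) = {3}"
  by (auto simp: bvars_def evars_def ltgd_def rtgd_def vars_of_simps)

lemma rule_body: "fst (rule_tgd (l, r)) = map (\<lambda>i. E (V i) (VC (l ! i)) (V (Suc i))) [0..<length l]"
  by (simp add: rule_tgd_def Let_def)

lemma rule_head: "snd (rule_tgd (l, r)) = L (V 0) (V (Suc (length l))) #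
   map (\<lambda>j. E (V (Suc (length l) + j)) (VC (r ! j)) (V (Suc (Suc (length l)) + j))) [0..<length r]
   @ [R (V (length l)) (V (Suc (length l) + length r))]"
  by (simp add: rule_tgd_def Let_def)

lemma bvars_rule_tgd:
  assumes "l \<noteq> []" shows "bvars (rule_tgd (l, r)) = {..length l}"
proof -
  have "bvars (rule_tgd (l, r)) = {x. \<exists>i<length l. x = i \<or> x = Suc i}"
    unfolding bvars_def rule_body vars_of_eq by auto
  also have "\<dots> = {..length l}"
  proof safe
    fix x assume "x \<le> length l"
    then show "\<exists>i<length l. x = i \<or> x = Suc i"
      using assms by (cases "x < length l") (auto intro: exI[of _ "x - 1"])
  qed auto
  finally show ?thesis .
qed

lemma evars_rule_tgd:
  assumes "l \<noteq> []"
  shows "evars (rule_tgd (l, r)) = {Suc (length l)..Suc (length l) + length r}"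
proof -
  have "vars_of (snd (rule_tgd (l, r))) = {0, length l} \<union> {Suc (length l)..Suc (length l) + length r}"
    unfolding rule_head vars_of_eq
  proof (safe, goal_cases)
    case (4 x)
    then show ?case
    proof (cases "x = Suc (length l) + length r")
      case False
      with 4 have "x - Suc (length l) < length r" by auto
      let ?a = "E (V x) (VC (r ! (x - Suc (length l)))) (V (Suc x))"
      have "?a \<in> (\<lambda>j. E (V (Suc (length l) + j)) (VC (r ! j)) (V (Suc (Suc (length l)) + j))) ` {0..<length r}"
        by (rule image_eqI[where x="x - Suc (length l)"]) (use 4 False in auto)
      then show ?thesis by auto
    qed auto
  qed auto
  then show ?thesis unfolding evars_def bvars_rule_tgd[OF assms] by auto
qed

lemma rule_body_subset_iff: "inst h ` set (fst (rule_tgd (l, r))) \<subseteq> I \<longleftrightarrow>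
   (\<forall>i<length l. E (h i) (C (l ! i)) (h (Suc i)) \<in> I)"
  unfolding rule_body by (auto simp: image_subset_iff)

lemma rule_head_subset_iff: "inst h ` set (snd (rule_tgd (l, r))) \<subseteq> I \<longleftrightarrow>
   L (h 0) (h (Suc (length l))) \<in> I \<and>
   (\<forall>j<length r. E (h (Suc (length l) + j)) (C (r ! j)) (h (Suc (Suc (length l)) + j)) \<in> I) \<and>
   R (h (length l)) (h (Suc (length l) + length r)) \<in> I"
  unfolding rule_head by (auto simp: image_subset_iff)

definition rule_closed :: "(bool list \<times> bool list) set \<Rightarrow> inst_db \<Rightarrow> bool" where
  "rule_closed \<Theta> I \<longleftrightarrow> (\<forall>l r g. (l, r) \<in> \<Theta> \<longrightarrow> (\<forall>i<length l. E (g i) (C (l ! i)) (g (Suc i)) \<in> I) \<longrightarrow>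
     (\<exists>q. L (g 0) (q 0) \<in> I \<and> (\<forall>j<length r. E (q j) (C (r ! j)) (q (Suc j)) \<in> I)
        \<and> R (g (length l)) (q (length r)) \<in> I))"

definition left_closed :: "inst_db \<Rightarrow> bool" where
  "left_closed I \<longleftrightarrow> (\<forall>a b y c. E a (C c) b \<in> I \<longrightarrow> L b y \<in> I \<longrightarrow> (\<exists>z. L a z \<in> I \<and> E z (C c) y \<in> I))"

definition right_closed :: "inst_db \<Rightarrow> bool" where
  "right_closed I \<longleftrightarrow> (\<forall>a b z c. R a z \<in> I \<longrightarrow> E a (C c) b \<in> I \<longrightarrow> (\<exists>z'. E z (C c) z' \<in> I \<and> R b z' \<in> I))"

lemma model_rule_closed:
  assumes m: "model (Sigma_R \<Theta>) I" and ne: "\<forall>(l, r)\<in>\<Theta>. l \<noteq> []"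
  shows "rule_closed \<Theta> I"
  unfolding rule_closed_def
proof (intro allI impI)
  fix l r g assume lr: "(l, r) \<in> \<Theta>" and b: "\<forall>i<length l. E (g i) (C (l ! i)) (g (Suc i)) \<in> I"
  have l: "l \<noteq> []" using ne lr by auto
  have bb: "inst g ` set (fst (rule_tgd (l, r))) \<subseteq> I" using b by (simp add: rule_body_subset_iff)
  obtain h' where ag: "\<forall>x\<in>bvars (rule_tgd (l, r)). h' x = g x"
    and hd: "inst h' ` set (snd (rule_tgd (l, r))) \<subseteq> I"
    using m[unfolded model_def, rule_format, OF rule_tgd_in_Sigma_R[OF lr] bb] by (elim exE conjE)
  have "h' 0 = g 0" "h' (length l) = g (length l)" using ag bvars_rule_tgd[OF l] by auto
  then show "\<exists>q. L (g 0) (q 0) \<in> I \<and> (\<forall>j<length r. E (q j) (C (r ! j)) (q (Suc j)) \<in> I)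
      \<and> R (g (length l)) (q (length r)) \<in> I"
    using hd unfolding rule_head_subset_iff
    by (intro exI[of _ "\<lambda>j. h' (Suc (length l) + j)"]) auto
qed

lemma model_left_closed:
  assumes m: "model (Sigma_R \<Theta>) I" shows "left_closed I"
  unfolding left_closed_def
proof (intro allI impI)
  fix a b y c assume "E a (C c) b \<in> I" "L b y \<in> I"
  then have bb: "inst (\<lambda>x. if x = 0 then a else if x = 1 then b else y) ` set (fst (ltgd c)) \<subseteq> I"
    by (simp add: ltgd_def)
  obtain h' where ag: "\<forall>x\<in>bvars (ltgd c). h' x = (if x = 0 then a else if x = 1 then b else y)"
    and hd: "inst h' ` set (snd (ltgd c)) \<subseteq> I"
    using m[unfolded model_def, rule_format, OF ltgd_in_Sigma_R bb] by (elim exE conjE)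
  have "h' 0 = a" "h' 2 = y" using ag by (simp_all add: bvars_ltgd)
  then show "\<exists>z. L a z \<in> I \<and> E z (C c) y \<in> I" using hd
    by (intro exI[of _ "h' 3"]) (auto simp: ltgd_def)
qed

lemma model_right_closed:
  assumes m: "model (Sigma_R \<Theta>) I" shows "right_closed I"
  unfolding right_closed_def
proof (intro allI impI)
  fix a b z c assume "R a z \<in> I" "E a (C c) b \<in> I"
  then have bb: "inst (\<lambda>x. if x = 0 then a else if x = 1 then z else b) ` set (fst (rtgd c)) \<subseteq> I"
    by (simp add: rtgd_def)
  obtain h' where ag: "\<forall>x\<in>bvars (rtgd c). h' x = (if x = 0 then a else if x = 1 then z else b)"
    and hd: "inst h' ` set (snd (rtgd c)) \<subseteq> I"
    using m[unfolded model_def, rule_format, OF rtgd_in_Sigma_R bb] by (elim exE conjE)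
  have "h' 1 = z" "h' 2 = b" using ag by (simp_all add: bvars_rtgd)
  then show "\<exists>z'. E z (C c) z' \<in> I \<and> R b z' \<in> I" using hd
    by (intro exI[of _ "h' 3"]) (auto simp: rtgd_def)
qed

lemma model_Sigma_R_intro:
  assumes ne: "\<forall>(l, r)\<in>\<Theta>. l \<noteq> []"
    and rc: "rule_closed \<Theta> I" and lc: "left_closed I" and rc': "right_closed I"
  shows "model (Sigma_R \<Theta>) I"
  unfolding model_def
proof (intro ballI allI impI)
  fix \<sigma> h assume s: "\<sigma> \<in> Sigma_R \<Theta>" and b: "inst h ` set (fst \<sigma>) \<subseteq> I"
  from s show "\<exists>h'. (\<forall>x\<in>bvars \<sigma>. h' x = h x) \<and> inst h' ` set (snd \<sigma>) \<subseteq> I"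
  proof (cases rule: Sigma_R_cases)
    case (rule l r)
    have l: "l \<noteq> []" using ne rule by auto
    from b have "\<forall>i<length l. E (h i) (C (l ! i)) (h (Suc i)) \<in> I" unfolding rule rule_body_subset_iff .
    with rc rule obtain q where q: "L (h 0) (q 0) \<in> I" "\<forall>j<length r. E (q j) (C (r ! j)) (q (Suc j)) \<in> I"
      "R (h (length l)) (q (length r)) \<in> I" unfolding rule_closed_def by blast
    define h' where "h' x = (if x \<le> length l then h x else q (x - Suc (length l)))" for x
    have "inst h' ` set (snd \<sigma>) \<subseteq> I" unfolding rule rule_head_subset_iff using q by (simp add: h'_def)
    moreover have "\<forall>x\<in>bvars \<sigma>. h' x = h x" unfolding rule bvars_rule_tgd[OF l] by (simp add: h'_def)
    ultimately show ?thesis by blast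
  next
    case (left c)
    from b have "E (h 0) (C c) (h 1) \<in> I" "L (h 1) (h 2) \<in> I" unfolding left by (auto simp: ltgd_def)
    with lc obtain z where "L (h 0) z \<in> I" "E z (C c) (h 2) \<in> I" unfolding left_closed_def by blast
    moreover have "\<forall>x\<in>bvars (ltgd c). (h(3 := z)) x = h x" by (simp add: bvars_ltgd)
    ultimately show ?thesis unfolding left by (intro exI[of _ "h(3 := z)"]) (simp add: ltgd_def)
  next
    case (right c)
    from b have "R (h 0) (h 1) \<in> I" "E (h 0) (C c) (h 2) \<in> I" unfolding right by (auto simp: rtgd_def)
    with rc' obtain z where "E (h 1) (C c) z \<in> I" "R (h 2) z \<in> I" unfolding right_closed_def by blast
    moreover have "\<forall>x\<in>bvars (rtgd c). (h(3 := z)) x = h x" by (simp add: bvars_rtgd)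
    ultimately show ?thesis unfolding right by (intro exI[of _ "h(3 := z)"]) (simp add: rtgd_def)
  qed
qed

section \<open>An infinite derivation yields an infinite core chase\<close>

lemma infinite_chain_from_invariant:
  assumes "P x0" "\<And>x. P x \<Longrightarrow> \<exists>y. step x y \<and> P y"
  shows "\<exists>s. s 0 = x0 \<and> (\<forall>i. step (s i) (s (Suc i)))"
proof -
  have "\<exists>s. \<forall>n. (P (s n) \<and> (n = 0 \<longrightarrow> s n = x0)) \<and> step (s n) (s (Suc n))"
    by (rule dependent_nat_choice) (use assms in auto)
  then show ?thesis by blast
qed

definition word_path :: "inst_db \<Rightarrow> (nat \<Rightarrow> term) \<Rightarrow> bool list \<Rightarrow> bool" where
  "word_path I g w \<longleftrightarrow> (\<forall>i<length w. E (g i) (C (w ! i)) (g (Suc i)) \<in> I)"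

lemma word_path_cong: "(\<And>i. i \<le> length w \<Longrightarrow> g i = g' i) \<Longrightarrow> word_path I g w \<longleftrightarrow> word_path I g' w"
  unfolding word_path_def by simp

lemma word_path_append:
  "word_path I g (u @ v) \<longleftrightarrow> word_path I g u \<and> word_path I (\<lambda>i. g (length u + i)) v"
proof
  assume p: "word_path I g (u @ v)"
  show "word_path I g u \<and> word_path I (\<lambda>i. g (length u + i)) v"
    unfolding word_path_def
  proof (intro conjI allI impI)
    fix i assume "i < length u"
    then show "E (g i) (C (u ! i)) (g (Suc i)) \<in> I"
      using p[unfolded word_path_def, rule_format, of i] by (simp add: nth_append)
  next
    fix j assume "j < length v"
    then show "E (g (length u + j)) (C (v ! j)) (g (length u + Suc j)) \<in> I"
      using p[unfolded word_path_def, rule_format, of "length u + j"] by (simp add: nth_append)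
  qed
next
  assume p: "word_path I g u \<and> word_path I (\<lambda>i. g (length u + i)) v"
  show "word_path I g (u @ v)"
    unfolding word_path_def
  proof (intro allI impI)
    fix i assume i: "i < length (u @ v)"
    show "E (g i) (C ((u @ v) ! i)) (g (Suc i)) \<in> I"
    proof (cases "i < length u")
      case True
      then show ?thesis using p unfolding word_path_def by (simp add: nth_append)
    next
      case False
      then have "i - length u < length v" "length u + (i - length u) = i" using i by auto
      then show ?thesis using p False unfolding word_path_def by (metis nth_append Suc_eq_plus1 add.assoc)
    qed
  qed
qed

lemma word_path_Cons:
  "word_path I g (c # w) \<longleftrightarrow> E (g 0) (C c) (g 1) \<in> I \<and> word_path I (\<lambda>i. g (Suc i)) w"
  using word_path_append[of I g "[c]" w] by (simp add: word_path_def)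

lemma hom_word_path: "hom c K J \<Longrightarrow> word_path K g w \<Longrightarrow> word_path J (c \<circ> g) w"
  unfolding word_path_def hom_def by force

lemma left_closed_copy_path:
  assumes lc: "left_closed I" and p: "word_path I g x" and a: "L (g (length x)) a \<in> I"
  shows "\<exists>p. p (length x) = a \<and> L (g 0) (p 0) \<in> I \<and> word_path I p x"
proof -
  have "\<exists>p. p i = a \<and> L (g 0) (p 0) \<in> I \<and> (\<forall>j<i. E (p j) (C (x ! j)) (p (Suc j)) \<in> I)"
    if "i \<le> length x" "L (g i) a \<in> I" for i a
    using that
  proof (induction i arbitrary: a)
    case 0
    then show ?case by (intro exI[of _ "\<lambda>_. a"]) auto
  next
    case (Suc i)
    have "E (g i) (C (x ! i)) (g (Suc i)) \<in> I" using p Suc.prems unfolding word_path_def by auto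
    then obtain z where z: "L (g i) z \<in> I" "E z (C (x ! i)) a \<in> I"
      using lc Suc.prems(2) unfolding left_closed_def by blast
    obtain p where p: "p i = z" "L (g 0) (p 0) \<in> I" "\<forall>j<i. E (p j) (C (x ! j)) (p (Suc j)) \<in> I"
      using Suc.IH[OF _ z(1)] Suc.prems(1) by auto
    have "E ((p(Suc i := a)) j) (C (x ! j)) ((p(Suc i := a)) (Suc j)) \<in> I" if "j < Suc i" for j
      using that p z by (cases "j = i") auto
    then show ?case using p by (intro exI[of _ "p(Suc i := a)"]) auto
  qed
  from this[OF order_refl a] show ?thesis unfolding word_path_def by blast
qed

lemma right_closed_copy_path:
  assumes rc: "right_closed I"
  shows "word_path I g y \<Longrightarrow> R (g 0) b \<in> I \<Longrightarrow> \<exists>p. p 0 = b \<and> word_path I p y"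
proof (induction y arbitrary: g b)
  case Nil
  then show ?case by (auto simp: word_path_def)
next
  case (Cons c y)
  then have e: "E (g 0) (C c) (g 1) \<in> I" and py: "word_path I (\<lambda>i. g (Suc i)) y"
    by (simp_all add: word_path_Cons)
  obtain z where z: "E b (C c) z \<in> I" "R (g 1) z \<in> I"
    using rc e Cons.prems(2) unfolding right_closed_def by blast
  obtain p where p: "p 0 = z" "word_path I p y"
    using Cons.IH[OF py] z(2) by auto
  show ?case
    by (intro exI[of _ "case_nat b p"]) (use z p in \<open>simp add: word_path_Cons\<close>)
qed

lemma model_rewrite_path:
  assumes m: "model (Sigma_R \<Theta>) I" and ne: "\<forall>(l, r)\<in>\<Theta>. l \<noteq> []"
    and pu: "word_path I g u" and rw: "rewrite \<Theta> u v"
  shows "\<exists>g'. word_path I g' v \<and> L (g 0) (g' 0) \<in> I"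
proof -
  obtain x y l r where lr: "(l, r) \<in> \<Theta>" and u: "u = x @ l @ y" and v: "v = x @ r @ y"
    using rw unfolding rewrite_def by blast
  define k where "k = length x"
  define m where "m = length r"
  have px: "word_path I g x" and pl: "word_path I (\<lambda>i. g (k + i)) l"
    and py: "word_path I (\<lambda>i. g (k + length l + i)) y"
    using pu unfolding u k_def word_path_append by (simp_all add: add.assoc)
  obtain q where q: "L (g k) (q 0) \<in> I" "word_path I q r" "R (g (k + length l)) (q m) \<in> I"
    using model_rule_closed[OF m ne, unfolded rule_closed_def, rule_format, OF lr, of "\<lambda>i. g (k + i)"] pl
    unfolding word_path_def m_def by auto
  obtain p where p: "p k = q 0" "L (g 0) (p 0) \<in> I" "word_path I p x"
    using left_closed_copy_path[OF model_left_closed[OF m] px] q(1) unfolding k_def by blast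
  obtain p' where p': "p' 0 = q m" "word_path I p' y"
    using right_closed_copy_path[OF model_right_closed[OF m] py] q(3) by auto
  define g' where "g' j = (if j \<le> k then p j else if j \<le> k + m then q (j - k) else p' (j - k - m))" for j
  have "word_path I g' x" using p(3) by (subst word_path_cong) (auto simp: g'_def k_def)
  moreover have "word_path I (\<lambda>i. g' (k + i)) r"
    using q(2) p(1) by (subst word_path_cong) (auto simp: g'_def m_def)
  moreover have "word_path I (\<lambda>i. g' (k + m + i)) y"
    using p'(2) p'(1) p(1) by (subst word_path_cong) (auto simp: g'_def)
  ultimately have "word_path I g' v" unfolding v word_path_append k_def m_def by (simp add: add.assoc)
  moreover have "g' 0 = p 0" by (simp add: g'_def)
  ultimately show ?thesis using p(2) by auto
qed

lemma model_infinite_L_chain: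
  assumes m: "model (Sigma_R \<Theta>) I" and ne: "\<forall>(l, r)\<in>\<Theta>. l \<noteq> []" and g: "word_path I g w0"
    and ws0: "ws 0 = w0" and wsr: "\<forall>i. rewrite \<Theta> (ws i) (ws (Suc i))"
  shows "\<exists>G. \<forall>j. L (G j) (G (Suc j)) \<in> I"
proof -
  have "\<exists>P. \<forall>j. word_path I (P j) (ws j) \<and> L (P j (0::nat)) (P (Suc j) 0) \<in> I"
  proof (rule dependent_nat_choice)
    show "\<exists>g. word_path I g (ws 0)" using g ws0 by blast
    show "\<exists>g'. word_path I g' (ws (Suc j)) \<and> L (g 0) (g' 0) \<in> I" if "word_path I g (ws j)" for g j
      using model_rewrite_path[OF m ne that] wsr by blast
  qed
  then obtain P where "\<forall>j. L (P j (0::nat)) (P (Suc j) 0) \<in> I" by blast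
  then show ?thesis by (intro exI[of _ "\<lambda>j. P j 0"])
qed

definition L_graded :: "inst_db \<Rightarrow> bool" where
  "L_graded I \<longleftrightarrow> (\<exists>\<rho> :: term \<Rightarrow> nat. \<forall>a b. L a b \<in> I \<longrightarrow> \<rho> a < \<rho> b)"

lemma L_graded_no_infinite_chain:
  assumes fin: "finite I" and gr: "L_graded I"
  shows "\<not> (\<forall>j. L (G j) (G (Suc j)) \<in> I)"
proof
  assume chain: "\<forall>j. L (G j) (G (Suc j)) \<in> I"
  obtain \<rho> :: "term \<Rightarrow> nat" where \<rho>: "\<And>a b. L a b \<in> I \<Longrightarrow> \<rho> a < \<rho> b"
    using gr unfolding L_graded_def by blast
  have rk: "j \<le> \<rho> (G j)" for j
  proof (induction j)
    case (Suc j)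
    then show ?case using \<rho> chain by (metis Suc_le_eq le_less_trans)
  qed simp
  have "G j \<in> adom I" for j
    using chain unfolding adom_def by (auto intro!: bexI[of _ "L (G j) (G (Suc j))"])
  then have "\<rho> (G (Suc (Max (\<rho> ` adom I)))) \<le> Max (\<rho> ` adom I)" using finite_adom[OF fin] by simp
  with rk show False by (meson not_less_eq_eq)
qed

definition chase_inv :: "bool list \<Rightarrow> inst_db \<Rightarrow> bool" where
  "chase_inv w0 I \<longleftrightarrow> finite I \<and> L_graded I \<and> (\<exists>g. word_path I g w0)"

lemma chase_inv_word_instance: "chase_inv w0 (word_instance w0)"
proof -
  have "word_instance w0 = (\<lambda>i. E (N i) (C (w0 ! i)) (N (Suc i))) ` {..<length w0}"
    unfolding word_instance_def by auto
  moreover have "L_graded (word_instance w0)" unfolding L_graded_def word_instance_def by auto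
  moreover have "word_path (word_instance w0) N w0" unfolding word_path_def word_instance_def by auto
  ultimately show ?thesis unfolding chase_inv_def by auto
qed

lemma chase_inv_active:
  assumes inv: "chase_inv w0 I" and ne: "\<forall>(l, r)\<in>\<Theta>. l \<noteq> []"
    and ws0: "ws 0 = w0" and wsr: "\<forall>i. rewrite \<Theta> (ws i) (ws (Suc i))"
  shows "\<exists>t. active (Sigma_R \<Theta>) I t"
proof (rule ccontr)
  assume "\<not> (\<exists>t. active (Sigma_R \<Theta>) I t)"
  then have "model (Sigma_R \<Theta>) I" by (simp add: model_iff_no_active)
  moreover obtain g where "word_path I g w0" using inv unfolding chase_inv_def by blast
  ultimately obtain G where "\<forall>j. L (G j) (G (Suc j)) \<in> I"
    using model_infinite_L_chain[OF _ ne _ ws0 wsr] by blast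
  with inv show False unfolding chase_inv_def using L_graded_no_infinite_chain by blast
qed

lemma fired_L_atom_fresh:
  assumes ne: "\<forall>(l, r)\<in>\<Theta>. l \<noteq> []" and ff: "fresh_firing (Sigma_R \<Theta>) I f"
    and act: "active (Sigma_R \<Theta>) I t" and b: "b \<in> set (snd (fst t))" and L: "inst (f t) b = L u v"
  shows "u \<in> adom I \<and> v \<notin> adom I"
proof -
  note tr = active_trigger[OF act]
  have key: "u \<in> adom I \<and> v \<notin> adom I"
    if "b = L (V x) (V y)" "x \<in> bvars (fst t)" "y \<in> evars (fst t)" for x y
  proof -
    have "u = f t x" "v = f t y" using L that(1) by auto
    then show ?thesis
      using fresh_firingD(1,2)[OF ff act] that body_var_in_adom[OF _ conjunct2[OF tr]] by auto
  qed
  from conjunct1[OF tr] show ?thesis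
  proof (cases rule: Sigma_R_cases)
    case (rule l r)
    have l: "l \<noteq> []" using ne rule by auto
    from b L have "b = L (V 0) (V (Suc (length l)))" unfolding rule rule_head by auto
    then show ?thesis using key rule bvars_rule_tgd[OF l] evars_rule_tgd[OF l] by auto
  next
    case (left c)
    from b L have "b = L (V 0) (V 3)" unfolding left ltgd_def by auto
    then show ?thesis using key left bvars_ltgd evars_ltgd by auto
  next
    case (right c)
    from b L show ?thesis unfolding right rtgd_def by auto
  qed
qed

lemma core_step_new_L_atoms:
  assumes ne: "\<forall>(l, r)\<in>\<Theta>. l \<noteq> []" and st: "core_step (Sigma_R \<Theta>) I J"
  obtains K where "is_core_of K J" "I \<subseteq> K"
    "\<And>u v. L u v \<in> K \<Longrightarrow> L u v \<in> I \<or> (u \<in> adom I \<and> v \<notin> adom I)"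
proof -
  from st have "\<exists>f. fresh_firing (Sigma_R \<Theta>) I f \<and> is_core_of (fire_all (Sigma_R \<Theta>) I f) J"
    unfolding core_step_iff by (rule conjunct2)
  then obtain f where ff: "fresh_firing (Sigma_R \<Theta>) I f" and c: "is_core_of (fire_all (Sigma_R \<Theta>) I f) J"
    by blast
  have "L u v \<in> I \<or> (u \<in> adom I \<and> v \<notin> adom I)" if "L u v \<in> fire_all (Sigma_R \<Theta>) I f" for u v
  proof (cases "L u v \<in> I")
    case False
    with that have "L u v \<in> (\<Union>t\<in>{t. active (Sigma_R \<Theta>) I t}. inst (f t) ` set (snd (fst t)))"
      unfolding fire_all_def by simp
    then obtain t where t: "active (Sigma_R \<Theta>) I t" and "L u v \<in> inst (f t) ` set (snd (fst t))"
      by auto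
    from this(2) obtain b where "b \<in> set (snd (fst t))" "inst (f t) b = L u v" by (metis imageE)
    from fired_L_atom_fresh[OF ne ff t this] show ?thesis ..
  qed simp
  then show ?thesis using that[OF c subset_fire_all] by blast
qed

lemma chase_inv_core_step:
  assumes ne: "\<forall>(l, r)\<in>\<Theta>. l \<noteq> []" and fT: "finite \<Theta>"
    and st: "core_step (Sigma_R \<Theta>) I J" and inv: "chase_inv w0 I"
  shows "chase_inv w0 J"
proof -
  have fin: "finite I" and "L_graded I" and "\<exists>g. word_path I g w0"
    using inv unfolding chase_inv_def by simp_all
  then obtain \<rho> :: "term \<Rightarrow> nat" and g where \<rho>: "\<And>a b. L a b \<in> I \<Longrightarrow> \<rho> a < \<rho> b"
    and g: "word_path I g w0" unfolding L_graded_def by blast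
  obtain K where c: "is_core_of K J" and IK: "I \<subseteq> K"
    and LK: "\<And>u v. L u v \<in> K \<Longrightarrow> L u v \<in> I \<or> (u \<in> adom I \<and> v \<notin> adom I)"
    using core_step_new_L_atoms[OF ne st] by metis
  obtain h where h: "hom h K J" using c unfolding is_core_of_def by blast
  have "word_path K g w0" using g IK unfolding word_path_def by blast
  then have path: "word_path J (h \<circ> g) w0" by (rule hom_word_path[OF h])
  text \<open>New L-atoms lead out of the old active domain, so they can be ranked above all of it.\<close>
  define \<rho>' where "\<rho>' z = (if z \<in> adom I then \<rho> z else Suc (Max (\<rho> ` adom I)))" for z
  have "\<rho>' a < \<rho>' b" if "L a b \<in> J" for a b
  proof -
    have "L a b \<in> K" using that c unfolding is_core_of_def by blast
    then consider "L a b \<in> I" | "a \<in> adom I" "b \<notin> adom I" using LK by blast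
    then show ?thesis
    proof cases
      case 1
      then have "a \<in> adom I" "b \<in> adom I" unfolding adom_def by (auto intro!: bexI[of _ "L a b"])
      then show ?thesis using \<rho>[OF 1] by (simp add: \<rho>'_def)
    next
      case 2
      have "\<rho> a \<le> Max (\<rho> ` adom I)" using 2 finite_adom[OF fin] by simp
      then show ?thesis using 2 by (simp add: \<rho>'_def)
    qed
  qed
  then have "L_graded J" unfolding L_graded_def by blast
  moreover have "finite J" by (rule finite_core_step[OF finite_Sigma_R[OF fT] fin st])
  ultimately show ?thesis unfolding chase_inv_def using path by blast
qed

lemma derivation_imp_core_chase_infinite:
  assumes fT: "finite \<Theta>" and ne: "\<forall>(l, r)\<in>\<Theta>. l \<noteq> []"
    and ws0: "ws 0 = w0" and wsr: "\<forall>i. rewrite \<Theta> (ws i) (ws (Suc i))"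
  shows "core_chase_infinite (Sigma_R \<Theta>) (word_instance w0)"
proof -
  have "\<exists>J. core_step (Sigma_R \<Theta>) I J \<and> chase_inv w0 J" if inv: "chase_inv w0 I" for I
  proof -
    have "finite I" using inv unfolding chase_inv_def by blast
    then obtain J where "core_step (Sigma_R \<Theta>) I J"
      using core_step_exists[OF finite_Sigma_R[OF fT] _ chase_inv_active[OF inv ne ws0 wsr]] by blast
    then show ?thesis using chase_inv_core_step[OF ne fT _ inv] by blast
  qed
  then show ?thesis unfolding core_chase_infinite_def
    using infinite_chain_from_invariant[of "chase_inv w0", OF chase_inv_word_instance] by blast
qed

section \<open>An infinite core chase yields an infinite derivation\<close>

text \<open>A history lists rewrite steps (position, left-hand side, right-hand side), most recent first.\<close>
type_synonym history = "(nat \<times> bool list \<times> bool list) list"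

fun hist_word :: "bool list \<Rightarrow> history \<Rightarrow> bool list" where
  "hist_word w0 [] = w0"
| "hist_word w0 ((k,l,r)#H) = take k (hist_word w0 H) @ r @ drop (k + length l) (hist_word w0 H)"

fun valid_hist :: "(bool list \<times> bool list) set \<Rightarrow> bool list \<Rightarrow> history \<Rightarrow> bool" where
  "valid_hist \<Theta> w0 [] = True"
| "valid_hist \<Theta> w0 ((k,l,r)#H) = (valid_hist \<Theta> w0 H \<and> (l,r) \<in> \<Theta> \<and> k + length l \<le> length (hist_word w0 H)
     \<and> take (length l) (drop k (hist_word w0 H)) = l)"

lemma valid_hist_rewrite:
  assumes "valid_hist \<Theta> w0 (s # H)"
  shows "rewrite \<Theta> (hist_word w0 H) (hist_word w0 (s # H))"
proof -
  obtain k l r where s: "s = (k, l, r)" by (cases s)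
  let ?w = "hist_word w0 H"
  have "?w = take k ?w @ take (length l) (drop k ?w) @ drop (length l) (drop k ?w)"
    by (simp only: append_take_drop_id)
  also have "take (length l) (drop k ?w) = l" using assms s by simp
  also have "drop (length l) (drop k ?w) = drop (k + length l) ?w" by (simp add: add.commute)
  finally have "?w = take k ?w @ l @ drop (k + length l) ?w" .
  then show ?thesis using assms s unfolding rewrite_def by auto
qed

lemma valid_hist_suffix: "valid_hist \<Theta> w0 (G @ H) \<Longrightarrow> valid_hist \<Theta> w0 H"
  by (induction G) (auto split: prod.splits)

lemma finite_valid_extensions:
  assumes "finite \<Theta>"
  shows "finite {s. valid_hist \<Theta> w0 (s#H)}"
proof -
  have "{s. valid_hist \<Theta> w0 (s#H)} \<subseteq> (\<lambda>(k,lr). (k, fst lr, snd lr)) ` ({..length (hist_word w0 H)} \<times> \<Theta>)"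
  proof
    fix s assume "s \<in> {s. valid_hist \<Theta> w0 (s#H)}"
    moreover obtain k l r where s: "s = (k,l,r)" by (cases s) auto
    ultimately have "k \<le> length (hist_word w0 H)" "(l,r) \<in> \<Theta>" by auto
    then show "s \<in> (\<lambda>(k,lr). (k, fst lr, snd lr)) ` ({..length (hist_word w0 H)} \<times> \<Theta>)"
      unfolding s by (auto intro!: image_eqI[of _ _ "(k,(l,r))"])
  qed
  then show ?thesis by (rule finite_subset) (use assms in auto)
qed

lemma valid_prefixes_decomp:
  assumes "valid_hist \<Theta> w0 H"
  shows "{G. valid_hist \<Theta> w0 (G @ H)} \<subseteq> {[]} \<union>
    (\<Union>s\<in>{s. valid_hist \<Theta> w0 (s#H)}. (\<lambda>G. G @ [s]) ` {G. valid_hist \<Theta> w0 (G @ (s#H))})"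
proof
  fix G assume G: "G \<in> {G. valid_hist \<Theta> w0 (G @ H)}"
  show "G \<in> {[]} \<union> (\<Union>s\<in>{s. valid_hist \<Theta> w0 (s#H)}. (\<lambda>G. G @ [s]) ` {G. valid_hist \<Theta> w0 (G @ (s#H))})"
  proof (cases G rule: rev_exhaust)
    case (snoc G' s)
    then have "valid_hist \<Theta> w0 (G' @ (s#H))" using G by simp
    moreover then have "valid_hist \<Theta> w0 (s#H)" by (rule valid_hist_suffix)
    ultimately show ?thesis using snoc by blast
  qed simp
qed

lemma infinite_valid_prefixes_child:
  assumes fT: "finite \<Theta>" and v: "valid_hist \<Theta> w0 H" and inf: "infinite {G. valid_hist \<Theta> w0 (G @ H)}"
  shows "\<exists>s. valid_hist \<Theta> w0 (s#H) \<and> infinite {G. valid_hist \<Theta> w0 (G @ (s#H))}"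
proof (rule ccontr)
  assume "\<not> ?thesis"
  then have "\<forall>s\<in>{s. valid_hist \<Theta> w0 (s#H)}. finite {G. valid_hist \<Theta> w0 (G @ (s#H))}" by blast
  then have "finite ({[]} \<union> (\<Union>s\<in>{s. valid_hist \<Theta> w0 (s#H)}. (\<lambda>G. G @ [s]) ` {G. valid_hist \<Theta> w0 (G @ (s#H))}))"
    using finite_valid_extensions[OF fT] by blast
  then show False using inf valid_prefixes_decomp[OF v] finite_subset by blast
qed


lemma infinite_valid_hists_derivation:
  assumes fT: "finite \<Theta>" and inf: "infinite {H. valid_hist \<Theta> w0 H}"
  shows "\<exists>ws. ws 0 = w0 \<and> (\<forall>i. rewrite \<Theta> (ws i) (ws (Suc i)))"
proof -
  let ?P = "\<lambda>H. valid_hist \<Theta> w0 H \<and> infinite {G. valid_hist \<Theta> w0 (G @ H)}"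
  let ?step = "\<lambda>H H'. \<exists>s. H' = s # H \<and> valid_hist \<Theta> w0 (s # H)"
  have "?P []" using inf by simp
  moreover have "\<exists>H'. ?step H H' \<and> ?P H'" if "?P H" for H
    using infinite_valid_prefixes_child[OF fT] that by blast
  ultimately obtain Hs where Hs0: "Hs 0 = []" and step: "\<And>i. ?step (Hs i) (Hs (Suc i))"
    using infinite_chain_from_invariant[of ?P "[]" ?step] by blast
  have "rewrite \<Theta> (hist_word w0 (Hs i)) (hist_word w0 (Hs (Suc i)))" for i
    using step[of i] valid_hist_rewrite by fastforce
  then show ?thesis using Hs0 by (intro exI[of _ "\<lambda>i. hist_word w0 (Hs i)"]) simp
qed

definition node :: "history \<Rightarrow> nat \<Rightarrow> term" where
  "node H i = N (to_nat (H, i))"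

lemma node_eq_iff[simp]: "node H i = node H' j \<longleftrightarrow> H = H' \<and> i = j"
  unfolding node_def by simp

lemma node_neq_C[simp]: "node H i \<noteq> C c"
  unfolding node_def by simp

text \<open>The canonical model: one path per history in F, each linked by L- and R-atoms to the path of
  the history it extends.\<close>
definition hist_instance :: "bool list \<Rightarrow> history set \<Rightarrow> inst_db" where
  "hist_instance w0 F = {E (node H i) (C (hist_word w0 H ! i)) (node H (Suc i)) | H i. H \<in> F \<and> i < length (hist_word w0 H)}
   \<union> {L (node H i) (node ((k,l,r)#H) i) | H k l r i. (k,l,r)#H \<in> F \<and> i \<le> k}
   \<union> {R (node H (k + length l + j)) (node ((k,l,r)#H) (k + length r + j)) | H k l r j.
        (k,l,r)#H \<in> F \<and> k + length l + j \<le> length (hist_word w0 H)}"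

lemma E_in_hist_instance: "E a b c \<in> hist_instance w0 F \<longleftrightarrow>
  (\<exists>H i. H \<in> F \<and> i < length (hist_word w0 H) \<and> a = node H i \<and> b = C (hist_word w0 H ! i) \<and> c = node H (Suc i))"
  unfolding hist_instance_def by blast

lemma L_in_hist_instance: "L a b \<in> hist_instance w0 F \<longleftrightarrow>
  (\<exists>H k l r i. (k,l,r)#H \<in> F \<and> i \<le> k \<and> a = node H i \<and> b = node ((k,l,r)#H) i)"
  unfolding hist_instance_def by blast

lemma R_in_hist_instance: "R a b \<in> hist_instance w0 F \<longleftrightarrow>
  (\<exists>H k l r j. (k,l,r)#H \<in> F \<and> k + length l + j \<le> length (hist_word w0 H) \<and>
     a = node H (k + length l + j) \<and> b = node ((k,l,r)#H) (k + length r + j))"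
  unfolding hist_instance_def by blast

lemma hist_word_nth_prefix: "k \<le> length (hist_word w0 H) \<Longrightarrow> i < k \<Longrightarrow> hist_word w0 ((k,l,r)#H) ! i = hist_word w0 H ! i"
  by (simp add: nth_append)

lemma hist_word_nth_middle: "k \<le> length (hist_word w0 H) \<Longrightarrow> j < length r \<Longrightarrow> hist_word w0 ((k,l,r)#H) ! (k + j) = r ! j"
  by (simp add: nth_append min_def)

lemma hist_word_nth_suffix: "k + length l \<le> length (hist_word w0 H) \<Longrightarrow> k + length l + j < length (hist_word w0 H) \<Longrightarrow>
   hist_word w0 ((k,l,r)#H) ! (k + length r + j) = hist_word w0 H ! (k + length l + j)"
  by (simp add: nth_append min_def add.commute add.left_commute)


text \<open>E-atoms of the canonical model only join consecutive nodes of one history, so an E-path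
  stays on a single history and spells a factor of its word.\<close>
lemma hist_instance_path_factor:
  assumes hb: "\<forall>i<length l. E (g i) (C (l ! i)) (g (Suc i)) \<in> hist_instance w0 F"
    and g0: "g 0 = node H p" and lne: "l \<noteq> []"
  shows "\<forall>i\<le>length l. g i = node H (p + i)" "p + length l \<le> length (hist_word w0 H)"
    "take (length l) (drop p (hist_word w0 H)) = l"
proof -
  let ?w = "hist_word w0 H"
  have unpack: "p + i < length ?w \<and> l ! i = ?w ! (p + i) \<and> g (Suc i) = node H (Suc (p + i))"
    if i: "i < length l" and gi: "g i = node H (p + i)" for i
  proof -
    obtain H' i' where "i' < length (hist_word w0 H')" "g i = node H' i'"
      "C (l ! i) = C (hist_word w0 H' ! i')" "g (Suc i) = node H' (Suc i')"
      using hb i unfolding E_in_hist_instance by blast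
    then show ?thesis using gi by auto
  qed
  have gi: "i \<le> length l \<Longrightarrow> g i = node H (p + i)" for i
  proof (induction i)
    case 0 then show ?case using g0 by simp
  next
    case (Suc i)
    then show ?case using unpack[of i] by simp
  qed
  then show "\<forall>i\<le>length l. g i = node H (p + i)" by blast
  have facts: "p + i < length ?w \<and> l ! i = ?w ! (p + i)" if "i < length l" for i
    using unpack[OF that gi] that by simp
  show len: "p + length l \<le> length ?w"
    using facts[of "length l - 1"] lne by (cases l) auto
  show "take (length l) (drop p ?w) = l"
    by (rule nth_equalityI) (use len facts in auto)
qed

lemma hist_instance_rule_closed:
  assumes ne: "\<forall>(l, r)\<in>\<Theta>. l \<noteq> []"
  shows "rule_closed \<Theta> (hist_instance w0 {H. valid_hist \<Theta> w0 H})"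
  unfolding rule_closed_def
proof (intro allI impI)
  let ?U = "hist_instance w0 {H. valid_hist \<Theta> w0 H}"
  fix l r g assume lr: "(l, r) \<in> \<Theta>" and hb: "\<forall>i<length l. E (g i) (C (l ! i)) (g (Suc i)) \<in> ?U"
  have lne: "l \<noteq> []" using ne lr by auto
  then have "E (g 0) (C (l ! 0)) (g (Suc 0)) \<in> ?U" using hb by simp
  then obtain H p where H: "valid_hist \<Theta> w0 H" and g0: "g 0 = node H p"
    unfolding E_in_hist_instance by blast
  note factor = hist_instance_path_factor[OF hb g0 lne]
  define G where "G = (p, l, r) # H"
  have vG: "valid_hist \<Theta> w0 G" unfolding G_def using H lr factor(2,3) by simp
  define q where "q j = node G (p + j)" for j
  have "L (g 0) (q 0) \<in> ?U" unfolding L_in_hist_instance q_def g0 G_def using vG[unfolded G_def]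
    by (intro exI[of _ H] exI[of _ p] exI[of _ l] exI[of _ r] exI[of _ p]) simp
  moreover have "\<forall>j<length r. E (q j) (C (r ! j)) (q (Suc j)) \<in> ?U"
  proof (intro allI impI)
    fix j assume j: "j < length r"
    have "p + j < length (hist_word w0 G)" using factor(2) j unfolding G_def by simp
    moreover have "hist_word w0 G ! (p + j) = r ! j"
      unfolding G_def using hist_word_nth_middle[of p w0 H j r l] factor(2) j by simp
    ultimately show "E (q j) (C (r ! j)) (q (Suc j)) \<in> ?U" unfolding E_in_hist_instance q_def using vG
      by (intro exI[of _ G] exI[of _ "p + j"]) simp
  qed
  moreover have "R (g (length l)) (q (length r)) \<in> ?U"
    unfolding R_in_hist_instance q_def G_def using vG[unfolded G_def] factor(1,2)
    by (intro exI[of _ H] exI[of _ p] exI[of _ l] exI[of _ r] exI[of _ 0]) simp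
  ultimately show "\<exists>q. L (g 0) (q 0) \<in> ?U \<and> (\<forall>j<length r. E (q j) (C (r ! j)) (q (Suc j)) \<in> ?U)
      \<and> R (g (length l)) (q (length r)) \<in> ?U"
    by blast
qed

lemma hist_instance_left_closed: "left_closed (hist_instance w0 {H. valid_hist \<Theta> w0 H})"
  unfolding left_closed_def
proof (intro allI impI)
  let ?U = "hist_instance w0 {H. valid_hist \<Theta> w0 H}"
  fix a b y c assume e: "E a (C c) b \<in> ?U" and l: "L b y \<in> ?U"
  from l obtain H k l r i where G: "valid_hist \<Theta> w0 ((k,l,r)#H)" and ik: "i \<le> k" and b: "b = node H i"
    and y: "y = node ((k,l,r)#H) i" unfolding L_in_hist_instance by blast
  from e obtain H2 p where p: "p < length (hist_word w0 H2)" "a = node H2 p" "C c = C (hist_word w0 H2 ! p)" "b = node H2 (Suc p)"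
    unfolding E_in_hist_instance by blast
  have HH: "H2 = H" "i = Suc p" using p(4) b by auto
  have kw: "k + length l \<le> length (hist_word w0 H)" using G by simp
  let ?G = "(k,l,r)#H"
  have "L a (node ?G p) \<in> ?U" unfolding L_in_hist_instance using G ik HH p(2)
    by (intro exI[of _ H] exI[of _ k] exI[of _ l] exI[of _ r] exI[of _ p]) simp
  moreover have "E (node ?G p) (C c) y \<in> ?U"
  proof -
    have "p < length (hist_word w0 ?G)" using ik HH kw by simp
    moreover have "hist_word w0 ?G ! p = hist_word w0 H ! p" using hist_word_nth_prefix[of k w0 H p l r] ik HH kw by simp
    ultimately show ?thesis unfolding E_in_hist_instance using G p(3) HH y
      by (intro exI[of _ ?G] exI[of _ p]) simp
  qed
  ultimately show "\<exists>z. L a z \<in> ?U \<and> E z (C c) y \<in> ?U" by blast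
qed

lemma hist_instance_right_closed: "right_closed (hist_instance w0 {H. valid_hist \<Theta> w0 H})"
  unfolding right_closed_def
proof (intro allI impI)
  let ?U = "hist_instance w0 {H. valid_hist \<Theta> w0 H}"
  fix a b z c assume r: "R a z \<in> ?U" and e: "E a (C c) b \<in> ?U"
  from r obtain H k l r j where G: "valid_hist \<Theta> w0 ((k,l,r)#H)" and "k + length l + j \<le> length (hist_word w0 H)"
    and a: "a = node H (k + length l + j)" and z: "z = node ((k,l,r)#H) (k + length r + j)" unfolding R_in_hist_instance by blast
  from e obtain H2 p where p: "p < length (hist_word w0 H2)" "a = node H2 p" "C c = C (hist_word w0 H2 ! p)" "b = node H2 (Suc p)"
    unfolding E_in_hist_instance by blast
  have HH: "H2 = H" "p = k + length l + j" using p(2) a by auto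
  have kw: "k + length l \<le> length (hist_word w0 H)" using G by simp
  let ?G = "(k,l,r)#H"
  have "E z (C c) (node ?G (Suc (k + length r + j))) \<in> ?U"
  proof -
    have "k + length r + j < length (hist_word w0 ?G)" using p(1) HH kw by simp
    moreover have "hist_word w0 ?G ! (k + length r + j) = hist_word w0 H ! (k + length l + j)"
      using hist_word_nth_suffix[OF kw, of j r] p(1) HH by simp
    ultimately show ?thesis unfolding E_in_hist_instance using G p(3) HH z
      by (intro exI[of _ ?G] exI[of _ "k + length r + j"]) simp
  qed
  moreover have "R b (node ?G (Suc (k + length r + j))) \<in> ?U"
    unfolding R_in_hist_instance using G p(1) HH p(4)
    by (intro exI[of _ H] exI[of _ k] exI[of _ l] exI[of _ r] exI[of _ "Suc j"]) simp
  ultimately show "\<exists>z'. E z (C c) z' \<in> ?U \<and> R b z' \<in> ?U" by blast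
qed

lemma hist_instance_model:
  assumes ne: "\<forall>(l, r)\<in>\<Theta>. l \<noteq> []"
  shows "model (Sigma_R \<Theta>) (hist_instance w0 {H. valid_hist \<Theta> w0 H})"
  by (rule model_Sigma_R_intro[OF ne hist_instance_rule_closed[OF ne] hist_instance_left_closed hist_instance_right_closed])

lemma maps_into_chase_fire_rule:
  assumes seq: "\<forall>i. core_step (Sigma_R \<Theta>) (seq i) (seq (Suc i))" and mA: "maps_into_chase seq A"
    and lr: "(l,r) \<in> \<Theta>" and lne: "l \<noteq> []"
    and hb: "\<forall>i<length l. E (g i) (C (l!i)) (g (Suc i)) \<in> A"
    and fr: "\<forall>j\<le>length r. q j \<notin> adom A \<and> (\<exists>n. q j = N n)" and inj: "inj_on q {..length r}"
  shows "maps_into_chase seq (A \<union> ({L (g 0) (q 0)} \<union> (\<lambda>j. E (q j) (C (r!j)) (q (Suc j))) ` {..<length r}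
          \<union> {R (g (length l)) (q (length r))}))"
proof -
  let ?n = "length l" and ?m = "length r"
  define h' where "h' x = (if x \<le> ?n then g x else q (x - Suc ?n))" for x
  have body: "inst g ` set (fst (rule_tgd (l,r))) \<subseteq> A" using hb by (simp add: rule_body_subset_iff)
  have agree: "\<forall>x\<in>bvars (rule_tgd (l,r)). h' x = g x" by (simp add: bvars_rule_tgd[OF lne] h'_def)
  have fresh: "\<forall>x\<in>evars (rule_tgd (l,r)). h' x \<notin> adom A \<and> (\<exists>n. h' x = N n)"
    using fr by (auto simp: evars_rule_tgd[OF lne] h'_def)
  have inj': "inj_on h' (evars (rule_tgd (l,r)))"
  proof (rule inj_onI)
    fix x y assume x: "x \<in> evars (rule_tgd (l,r))" and y: "y \<in> evars (rule_tgd (l,r))" and e: "h' x = h' y"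
    have "x - Suc ?n \<in> {..?m}" "y - Suc ?n \<in> {..?m}" using x y by (auto simp: evars_rule_tgd[OF lne])
    moreover have "q (x - Suc ?n) = q (y - Suc ?n)" using e x y by (auto simp: evars_rule_tgd[OF lne] h'_def)
    ultimately have "x - Suc ?n = y - Suc ?n" using inj by (auto dest: inj_onD)
    then show "x = y" using x y by (auto simp: evars_rule_tgd[OF lne])
  qed
  have M: "maps_into_chase seq (A \<union> inst h' ` set (snd (rule_tgd (l,r))))"
    by (rule maps_into_chase_fire[OF seq mA rule_tgd_in_Sigma_R[OF lr] body agree fresh inj'])
  have "{L (g 0) (q 0)} \<union> (\<lambda>j. E (q j) (C (r!j)) (q (Suc j))) ` {..<length r}
          \<union> {R (g (length l)) (q (length r))} \<subseteq> inst h' ` set (snd (rule_tgd (l,r)))"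
  proof -
    from subset_refl[of "inst h' ` set (snd (rule_tgd (l,r)))"] have "L (h' 0) (h' (Suc ?n)) \<in> inst h' ` set (snd (rule_tgd (l,r)))"
      "\<forall>j<?m. E (h' (Suc ?n + j)) (C (r!j)) (h' (Suc (Suc ?n) + j)) \<in> inst h' ` set (snd (rule_tgd (l,r)))"
      "R (h' ?n) (h' (Suc ?n + ?m)) \<in> inst h' ` set (snd (rule_tgd (l,r)))"
      unfolding rule_head_subset_iff by blast+
    then show ?thesis by (auto simp: h'_def)
  qed
  then show ?thesis by (intro maps_into_chase_subset[OF M] Un_mono order_refl)
qed

lemma maps_into_chase_fire_left:
  assumes seq: "\<forall>i. core_step (Sigma_R \<Theta>) (seq i) (seq (Suc i))" and mA: "maps_into_chase seq A"
    and e: "E a (C c) b \<in> A" and l: "L b y \<in> A" and z: "z \<notin> adom A" "z = N n"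
  shows "maps_into_chase seq (A \<union> {L a z, E z (C c) y})"
proof -
  define h where "h x = (if x = 0 then a else if x = 1 then b else y)" for x :: nat
  have body: "inst h ` set (fst (ltgd c)) \<subseteq> A" using e l by (simp add: ltgd_def h_def)
  have agree: "\<forall>x\<in>bvars (ltgd c). (h(3:=z)) x = h x" by (simp add: bvars_ltgd)
  have fresh: "\<forall>x\<in>evars (ltgd c). (h(3:=z)) x \<notin> adom A \<and> (\<exists>n. (h(3:=z)) x = N n)"
    using z by (simp add: evars_ltgd)
  have inj: "inj_on (h(3:=z)) (evars (ltgd c))" by (simp add: evars_ltgd)
  have M: "maps_into_chase seq (A \<union> inst (h(3:=z)) ` set (snd (ltgd c)))"
    by (rule maps_into_chase_fire[OF seq mA ltgd_in_Sigma_R body agree fresh inj])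
  have "inst (h(3:=z)) ` set (snd (ltgd c)) = {L a z, E z (C c) y}" by (simp add: ltgd_def h_def)
  then show ?thesis using M by simp
qed

lemma maps_into_chase_fire_right:
  assumes seq: "\<forall>i. core_step (Sigma_R \<Theta>) (seq i) (seq (Suc i))" and mA: "maps_into_chase seq A"
    and r: "R a z \<in> A" and e: "E a (C c) b \<in> A" and z: "z' \<notin> adom A" "z' = N n"
  shows "maps_into_chase seq (A \<union> {E z (C c) z', R b z'})"
proof -
  define h where "h x = (if x = 0 then a else if x = 1 then z else b)" for x :: nat
  have body: "inst h ` set (fst (rtgd c)) \<subseteq> A" using e r by (simp add: rtgd_def h_def)
  have agree: "\<forall>x\<in>bvars (rtgd c). (h(3:=z')) x = h x" by (simp add: bvars_rtgd)
  have fresh: "\<forall>x\<in>evars (rtgd c). (h(3:=z')) x \<notin> adom A \<and> (\<exists>n. (h(3:=z')) x = N n)"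
    using z by (simp add: evars_rtgd)
  have inj: "inj_on (h(3:=z')) (evars (rtgd c))" by (simp add: evars_rtgd)
  have M: "maps_into_chase seq (A \<union> inst (h(3:=z')) ` set (snd (rtgd c)))"
    by (rule maps_into_chase_fire[OF seq mA rtgd_in_Sigma_R body agree fresh inj])
  have "inst (h(3:=z')) ` set (snd (rtgd c)) = {E z (C c) z', R b z'}" by (simp add: rtgd_def h_def)
  then show ?thesis using M by simp
qed

definition copy_atoms :: "bool list \<Rightarrow> history \<Rightarrow> nat \<Rightarrow> bool list \<Rightarrow> bool list \<Rightarrow> nat \<Rightarrow> nat \<Rightarrow> inst_db" where
  "copy_atoms w0 H k l r a b =
   {L (node H i) (node ((k,l,r)#H) i) | i. a \<le> i \<and> i \<le> k}
   \<union> {E (node ((k,l,r)#H) i) (C (hist_word w0 ((k,l,r)#H) ! i)) (node ((k,l,r)#H) (Suc i)) | i. a \<le> i \<and> i < b}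
   \<union> {R (node H (k + length l + j)) (node ((k,l,r)#H) (k + length r + j)) | j. k + length r + j \<le> b}"

lemma copy_atoms_adom:
  assumes "a \<le> k" "k \<le> b" "node G' i \<in> adom (copy_atoms w0 H k l r a b)"
  shows "G' = H \<or> (G' = (k,l,r)#H \<and> a \<le> i \<and> i \<le> b)"
  using assms unfolding adom_def copy_atoms_def by auto

lemma node_is_null: "\<exists>n. node H i = N n" by (simp add: node_def)

context
  fixes \<Theta> :: "(bool list \<times> bool list) set" and seq :: "nat \<Rightarrow> inst_db" and A :: inst_db
    and w0 :: "bool list" and H :: history and k :: nat and l r :: "bool list"
  assumes seq: "\<forall>i. core_step (Sigma_R \<Theta>) (seq i) (seq (Suc i))" and mA: "maps_into_chase seq A"
    and valid: "valid_hist \<Theta> w0 ((k, l, r) # H)" and lne: "l \<noteq> []"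
    and EH: "\<forall>i<length (hist_word w0 H). E (node H i) (C (hist_word w0 H ! i)) (node H (Suc i)) \<in> A"
    and fresh: "\<forall>i. node ((k, l, r) # H) i \<notin> adom A"
begin

abbreviation "child \<equiv> (k, l, r) # H"
abbreviation "parent_word \<equiv> hist_word w0 H"

private lemma child_facts:
  "(l, r) \<in> \<Theta>" "k + length l \<le> length parent_word" "take (length l) (drop k parent_word) = l"
  using valid by auto

private lemma lhs_nth:
  assumes "i < length l" shows "l ! i = parent_word ! (k + i)"
proof -
  have "l ! i = take (length l) (drop k parent_word) ! i" using child_facts(3) by simp
  also have "\<dots> = parent_word ! (k + i)" using assms child_facts(2) by simp
  finally show ?thesis .
qed

private lemma child_word_nth_prefix: "i < k \<Longrightarrow> hist_word w0 child ! i = parent_word ! i"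
  using hist_word_nth_prefix child_facts(2) by simp

private lemma child_word_nth_middle: "j < length r \<Longrightarrow> hist_word w0 child ! (k + j) = r ! j"
  using hist_word_nth_middle[of k w0 H j r l] child_facts(2) by simp

private lemma child_word_nth_suffix: "k + length l + j < length parent_word \<Longrightarrow>
    hist_word w0 child ! (k + length r + j) = parent_word ! (k + length l + j)"
  using hist_word_nth_suffix[of k l w0 H j r] child_facts(2) by simp

private lemma child_node_fresh:
  assumes "a \<le> k" "k \<le> b" "i < a \<or> b < i"
  shows "node child i \<notin> adom (A \<union> copy_atoms w0 H k l r a b)"
proof
  assume "node child i \<in> adom (A \<union> copy_atoms w0 H k l r a b)"
  then consider "node child i \<in> adom A" | "node child i \<in> adom (copy_atoms w0 H k l r a b)"
    unfolding adom_Un by blast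
  then show False
  proof cases
    case 1
    with fresh show False by blast
  next
    case 2
    from copy_atoms_adom[OF assms(1,2) 2] assms(3) show False by auto
  qed
qed

text \<open>The child path is built in three phases: fire the rule on the rewritten factor, then copy the
  prefix leftwards with the L-tgds and the suffix rightwards with the R-tgds.\<close>

private lemma copy_rule_application: "maps_into_chase seq (A \<union> copy_atoms w0 H k l r k (k + length r))"
proof -
  note lr = child_facts(1) and kn = child_facts(2)
  have hb: "\<forall>i<length l. E (node H (k + i)) (C (l!i)) (node H (k + Suc i)) \<in> A"
  proof (intro allI impI)
    fix i assume i: "i < length l"
    then have "k + i < length parent_word" using kn by simp
    then have "E (node H (k+i)) (C (parent_word ! (k+i))) (node H (Suc (k+i))) \<in> A" using EH by blast
    then show "E (node H (k + i)) (C (l!i)) (node H (k + Suc i)) \<in> A" using lhs_nth[of i] i by simp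
  qed
  have fr: "\<forall>j\<le>length r. node child (k + j) \<notin> adom A \<and> (\<exists>n. node child (k + j) = N n)"
    using fresh node_is_null by blast
  have inj: "inj_on (\<lambda>j. node child (k + j)) {..length r}" by (rule inj_onI) simp
  have M: "maps_into_chase seq (A \<union> ({L (node H (k + 0)) (node child (k + 0))} \<union> (\<lambda>j. E (node child (k + j)) (C (r!j)) (node child (k + Suc j))) ` {..<length r}
        \<union> {R (node H (k + length l)) (node child (k + length r))}))"
    using maps_into_chase_fire_rule[OF seq mA lr lne, of "\<lambda>i. node H (k + i)" "\<lambda>j. node child (k + j)"] hb fr inj by simp
  have "copy_atoms w0 H k l r k (k + length r) \<subseteq> {L (node H (k + 0)) (node child (k + 0))} \<union> (\<lambda>j. E (node child (k + j)) (C (r!j)) (node child (k + Suc j))) ` {..<length r}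
        \<union> {R (node H (k + length l)) (node child (k + length r))}"
  proof
    fix x assume "x \<in> copy_atoms w0 H k l r k (k + length r)"
    then consider "x = L (node H k) (node child k)"
      | i where "k \<le> i" "i < k + length r" "x = E (node child i) (C (hist_word w0 child ! i)) (node child (Suc i))"
      | "x = R (node H (k + length l)) (node child (k + length r))"
      unfolding copy_atoms_def by auto
    then show "x \<in> {L (node H (k + 0)) (node child (k + 0))} \<union> (\<lambda>j. E (node child (k + j)) (C (r!j)) (node child (k + Suc j))) ` {..<length r}
        \<union> {R (node H (k + length l)) (node child (k + length r))}"
    proof cases
      case (2 i)
      then have "x = E (node child (k + (i - k))) (C (r!(i-k))) (node child (k + Suc (i - k)))"
        using child_word_nth_middle[of "i - k"] by simp
      moreover have "i - k < length r" using 2 by simp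
      ultimately show ?thesis by blast
    qed auto
  qed
  then show ?thesis by (intro maps_into_chase_subset[OF M] Un_mono order_refl)
qed

private lemma copy_prefix: "t \<le> k \<Longrightarrow> maps_into_chase seq (A \<union> copy_atoms w0 H k l r (k - t) (k + length r))"
proof (induction t)
  case 0 then show ?case using copy_rule_application by simp
next
  note kn = child_facts(2)
  case (Suc t)
  define a where "a = k - t"
  define a' where "a' = k - Suc t"
  have aa: "a = Suc a'" "a' < k" "a \<le> k" using Suc.prems unfolding a_def a'_def by auto
  let ?B = "A \<union> copy_atoms w0 H k l r a (k + length r)"
  have mB: "maps_into_chase seq ?B" using Suc by (simp add: a_def)
  have e: "E (node H a') (C (parent_word ! a')) (node H a) \<in> ?B"
  proof -
    have "a' < length parent_word" using aa kn by simp
    then show ?thesis using EH aa by auto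
  qed
  have l: "L (node H a) (node child a) \<in> ?B" unfolding copy_atoms_def using aa by blast
  have z: "node child a' \<notin> adom ?B" using child_node_fresh aa by simp
  obtain nn where nn: "node child a' = N nn" using node_is_null by blast
  have M: "maps_into_chase seq (?B \<union> {L (node H a') (node child a'), E (node child a') (C (parent_word ! a')) (node child a)})"
    by (rule maps_into_chase_fire_left[OF seq mB e l z nn])
  have "copy_atoms w0 H k l r a' (k + length r) \<subseteq> ?B \<union> {L (node H a') (node child a'), E (node child a') (C (parent_word ! a')) (node child a)}"
  proof
    fix x assume x: "x \<in> copy_atoms w0 H k l r a' (k + length r)"
    show "x \<in> ?B \<union> {L (node H a') (node child a'), E (node child a') (C (parent_word ! a')) (node child a)}"
    proof (cases "x \<in> copy_atoms w0 H k l r a (k + length r)")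
      case False
      have ci: "\<And>i. a' \<le> i \<Longrightarrow> i = a' \<or> a \<le> i" using aa by auto
      from x False ci have "x = L (node H a') (node child a') \<or> x = E (node child a') (C (hist_word w0 child ! a')) (node child (Suc a'))"
        unfolding copy_atoms_def by (auto simp del: hist_word.simps)
      then show ?thesis using child_word_nth_prefix[OF aa(2)] aa by auto
    qed simp
  qed
  then have "A \<union> copy_atoms w0 H k l r a' (k + length r) \<subseteq> ?B \<union> {L (node H a') (node child a'), E (node child a') (C (parent_word ! a')) (node child a)}"
    by blast
  then have "maps_into_chase seq (A \<union> copy_atoms w0 H k l r a' (k + length r))" by (rule maps_into_chase_subset[OF M])
  then show ?case by (simp add: a'_def)
qed

private lemma copy_suffix:
  "t \<le> length parent_word - k - length l \<Longrightarrow> maps_into_chase seq (A \<union> copy_atoms w0 H k l r 0 (k + length r + t))"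
proof (induction t)
  case 0 then show ?case using copy_prefix[of k] by simp
next
  case (Suc t)
  define b where "b = k + length r + t"
  let ?B = "A \<union> copy_atoms w0 H k l r 0 b"
  have mB: "maps_into_chase seq ?B" using Suc by (simp add: b_def)
  have tw: "k + length l + t < length parent_word" using Suc.prems by simp
  have r: "R (node H (k + length l + t)) (node child b) \<in> ?B" unfolding copy_atoms_def b_def by blast
  have e: "E (node H (k + length l + t)) (C (parent_word ! (k + length l + t))) (node H (Suc (k + length l + t))) \<in> ?B"
    using EH tw by auto
  have z: "node child (Suc b) \<notin> adom ?B" using child_node_fresh by (simp add: b_def)
  obtain nn where nn: "node child (Suc b) = N nn" using node_is_null by blast
  have M: "maps_into_chase seq (?B \<union> {E (node child b) (C (parent_word ! (k + length l + t))) (node child (Suc b)), R (node H (Suc (k + length l + t))) (node child (Suc b))})"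
    using maps_into_chase_fire_right[OF seq mB r e z nn] by simp
  have "copy_atoms w0 H k l r 0 (Suc b) \<subseteq> ?B \<union> {E (node child b) (C (parent_word ! (k + length l + t))) (node child (Suc b)), R (node H (Suc (k + length l + t))) (node child (Suc b))}"
  proof
    fix x assume x: "x \<in> copy_atoms w0 H k l r 0 (Suc b)"
    show "x \<in> ?B \<union> {E (node child b) (C (parent_word ! (k + length l + t))) (node child (Suc b)), R (node H (Suc (k + length l + t))) (node child (Suc b))}"
    proof (cases "x \<in> copy_atoms w0 H k l r 0 b")
      case False
      have ci: "\<And>i. i < Suc b \<Longrightarrow> i < b \<or> i = b" by auto
      have cj: "\<And>j. k + length r + j \<le> Suc b \<Longrightarrow> k + length r + j \<le> b \<or> j = Suc t" unfolding b_def by auto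
      from x False ci cj have "x = E (node child b) (C (hist_word w0 child ! b)) (node child (Suc b)) \<or>
          x = R (node H (k + length l + Suc t)) (node child (k + length r + Suc t))"
        unfolding copy_atoms_def by (auto simp del: hist_word.simps simp: b_def)
      then show ?thesis using child_word_nth_suffix[OF tw] unfolding b_def by auto
    qed simp
  qed
  then have "A \<union> copy_atoms w0 H k l r 0 (Suc b) \<subseteq> ?B \<union> {E (node child b) (C (parent_word ! (k + length l + t))) (node child (Suc b)), R (node H (Suc (k + length l + t))) (node child (Suc b))}"
    by blast
  then have "maps_into_chase seq (A \<union> copy_atoms w0 H k l r 0 (Suc b))" by (rule maps_into_chase_subset[OF M])
  then show ?case by (simp add: b_def)
qed

lemma maps_into_chase_copy: "maps_into_chase seq (A \<union> hist_instance w0 {child})"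
proof -
  have "hist_instance w0 {child} \<subseteq> copy_atoms w0 H k l r 0 (k + length r + (length parent_word - k - length l))"
    unfolding hist_instance_def copy_atoms_def using child_facts(2) by auto
  then have "A \<union> hist_instance w0 {child} \<subseteq> A \<union> copy_atoms w0 H k l r 0 (k + length r + (length parent_word - k - length l))"
    by blast
  then show ?thesis by (rule maps_into_chase_subset[OF copy_suffix[OF order_refl]])
qed

end

lemma hist_instance_Un: "hist_instance w0 (A \<union> B) = hist_instance w0 A \<union> hist_instance w0 B"
proof (rule set_eqI)
  fix x show "x \<in> hist_instance w0 (A \<union> B) \<longleftrightarrow> x \<in> hist_instance w0 A \<union> hist_instance w0 B"
    by (cases x; simp only: Un_iff E_in_hist_instance L_in_hist_instance R_in_hist_instance; blast)
qed

lemma node_in_adom_hist_instance: "node G i \<in> adom (hist_instance w0 F) \<Longrightarrow> G \<in> F \<or> (\<exists>s. s#G \<in> F)"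
  unfolding adom_def hist_instance_def by auto

lemma maps_into_chase_root:
  assumes s0: "seq 0 = word_instance w0"
  shows "maps_into_chase seq (hist_instance w0 {[]})"
proof -
  define \<psi> where "\<psi> z = (case z of N n \<Rightarrow> N (snd (from_nat n :: history \<times> nat)) | C c \<Rightarrow> C c)" for z
  have \<psi>node: "\<psi> (node H i) = N i" for H i by (simp add: \<psi>_def node_def)
  have "hom \<psi> (hist_instance w0 {[]}) (seq 0)"
    unfolding hom_def
  proof (intro conjI allI subsetI)
    fix c show "\<psi> (C c) = C c" by (simp add: \<psi>_def)
  next
    fix x assume "x \<in> map_atom \<psi> ` hist_instance w0 {[]}"
    then obtain y where y: "y \<in> hist_instance w0 {[]}" "x = map_atom \<psi> y" by blast
    from y(1) obtain i where "i < length w0" "y = E (node [] i) (C (w0 ! i)) (node [] (Suc i))"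
      unfolding hist_instance_def by auto
    then show "x \<in> seq 0" using y(2) \<psi>node unfolding s0 word_instance_def by (auto simp: \<psi>_def)
  qed
  then show ?thesis unfolding maps_into_chase_def by blast
qed


lemma maps_into_chase_add_child:
  assumes seq: "\<forall>i. core_step (Sigma_R \<Theta>) (seq i) (seq (Suc i))" and ne: "\<forall>(l, r)\<in>\<Theta>. l \<noteq> []"
    and mF: "maps_into_chase seq (hist_instance w0 F)" and valid: "valid_hist \<Theta> w0 ((k, l, r) # H)"
    and parent: "H \<in> F" and new: "(k, l, r) # H \<notin> F" and leaf: "\<And>s. s # (k, l, r) # H \<notin> F"
  shows "maps_into_chase seq (hist_instance w0 (insert ((k, l, r) # H) F))"
proof -
  have "l \<noteq> []" using ne valid by auto
  moreover have "\<forall>i<length (hist_word w0 H). E (node H i) (C (hist_word w0 H ! i)) (node H (Suc i))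
      \<in> hist_instance w0 F"
    using parent unfolding E_in_hist_instance by blast
  moreover have "\<forall>i. node ((k, l, r) # H) i \<notin> adom (hist_instance w0 F)"
    using node_in_adom_hist_instance new leaf by blast
  ultimately have "maps_into_chase seq (hist_instance w0 F \<union> hist_instance w0 {(k, l, r) # H})"
    by (rule maps_into_chase_copy[OF seq mF valid])
  then show ?thesis using hist_instance_Un[of w0 F "{(k, l, r) # H}"] by simp
qed

lemma maps_into_chase_valid_hists_upto:
  assumes seq: "\<forall>i. core_step (Sigma_R \<Theta>) (seq i) (seq (Suc i))" and s0: "seq 0 = word_instance w0"
    and fin: "finite {H. valid_hist \<Theta> w0 H}" and ne: "\<forall>(l, r)\<in>\<Theta>. l \<noteq> []"
  shows "maps_into_chase seq (hist_instance w0 {H. valid_hist \<Theta> w0 H \<and> length H \<le> d})"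
proof (induction d)
  case 0
  have "{H. valid_hist \<Theta> w0 H \<and> length H \<le> 0} = {[]}" by auto
  then show ?case using maps_into_chase_root[of seq w0, OF s0] by simp
next
  case (Suc d)
  define Fd where "Fd = {H. valid_hist \<Theta> w0 H \<and> length H \<le> d}"
  define Ly where "Ly = {H. valid_hist \<Theta> w0 H \<and> length H = Suc d}"
  have "finite X \<Longrightarrow> X \<subseteq> Ly \<Longrightarrow> maps_into_chase seq (hist_instance w0 (Fd \<union> X))" for X
  proof (induction X rule: finite_induct)
    case empty
    then show ?case using Suc.IH unfolding Fd_def by simp
  next
    case (insert G X)
    then have GL: "G \<in> Ly" and XL: "X \<subseteq> Ly" by auto
    from GL obtain k l r H where G: "G = (k, l, r) # H" unfolding Ly_def by (cases G) auto
    have valid: "valid_hist \<Theta> w0 ((k, l, r) # H)" using GL G unfolding Ly_def by simp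
    have "maps_into_chase seq (hist_instance w0 (insert ((k, l, r) # H) (Fd \<union> X)))"
    proof (rule maps_into_chase_add_child[OF seq ne _ valid])
      show "maps_into_chase seq (hist_instance w0 (Fd \<union> X))" using insert by blast
      show "H \<in> Fd \<union> X" using GL G valid unfolding Ly_def Fd_def by simp
      show "(k, l, r) # H \<notin> Fd \<union> X" using insert(2) G GL unfolding Fd_def Ly_def by auto
      show "s # (k, l, r) # H \<notin> Fd \<union> X" for s using XL GL G unfolding Fd_def Ly_def by auto
    qed
    then show ?case using G by simp
  qed
  moreover have "finite Ly" using fin unfolding Ly_def by (rule finite_subset[rotated]) auto
  ultimately have "maps_into_chase seq (hist_instance w0 (Fd \<union> Ly))" by blast
  moreover have "Fd \<union> Ly = {H. valid_hist \<Theta> w0 H \<and> length H \<le> Suc d}" unfolding Fd_def Ly_def by auto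
  ultimately show ?case by simp
qed

lemma word_instance_hom_hist_instance:
  assumes "[] \<in> F"
  shows "hom (case_term C (node [])) (word_instance w0) (hist_instance w0 F)"
  unfolding hom_def
proof (intro conjI allI subsetI)
  fix c show "case_term C (node []) (C c) = C c" by simp
next
  fix x assume "x \<in> map_atom (case_term C (node [])) ` word_instance w0"
  then obtain i where i: "i < length w0" and x: "x = E (node [] i) (C (w0 ! i)) (node [] (Suc i))"
    unfolding word_instance_def by auto
  show "x \<in> hist_instance w0 F"
    unfolding x E_in_hist_instance using assms i by (intro exI[of _ "[]"] exI[of _ i]) simp
qed

lemma core_chase_infinite_imp_derivation:
  assumes fT: "finite \<Theta>" and ne: "\<forall>(l, r)\<in>\<Theta>. l \<noteq> []"
    and ch: "core_chase_infinite (Sigma_R \<Theta>) (word_instance w0)"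
  shows "\<exists>ws. ws 0 = w0 \<and> (\<forall>i. rewrite \<Theta> (ws i) (ws (Suc i)))"
proof (rule ccontr)
  assume no_derivation: "\<not> ?thesis"
  obtain seq where s0: "seq 0 = word_instance w0" and seq: "\<forall>i. core_step (Sigma_R \<Theta>) (seq i) (seq (Suc i))"
    using ch unfolding core_chase_infinite_def by blast
  have fin: "finite {H. valid_hist \<Theta> w0 H}"
    using infinite_valid_hists_derivation[OF fT] no_derivation by blast
  let ?D = "Max (length ` {H. valid_hist \<Theta> w0 H})"
  have "{H. valid_hist \<Theta> w0 H \<and> length H \<le> ?D} = {H. valid_hist \<Theta> w0 H}"
    using fin by (auto intro!: Max_ge)
  then have mU: "maps_into_chase seq (hist_instance w0 {H. valid_hist \<Theta> w0 H})"
    using maps_into_chase_valid_hists_upto[OF seq s0 fin ne, of ?D] by simp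
  have e0: "hom (case_term C (node [])) (seq 0) (hist_instance w0 {H. valid_hist \<Theta> w0 H})"
    unfolding s0 by (rule word_instance_hom_hist_instance) simp
  have fin0: "finite (seq 0)" using chase_inv_word_instance[of w0] s0 unfolding chase_inv_def by simp
  show False
    by (rule core_chase_model_equivalent_stops[OF finite_Sigma_R[OF fT] fin0 seq hist_instance_model[OF ne] e0 mU])
qed

theorem theorem8:
  fixes \<Theta> :: "(bool list \<times> bool list) set" and w0 :: "bool list"
  assumes "finite \<Theta>"
    and "\<forall>(l, r)\<in>\<Theta>. l \<noteq> []"
  shows "core_chase_infinite (Sigma_R \<Theta>) (word_instance w0) \<longleftrightarrow>
         (\<exists>ws. ws 0 = w0 \<and> (\<forall>i. rewrite \<Theta> (ws i) (ws (Suc i))))"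
  using core_chase_infinite_imp_derivation[OF assms] derivation_imp_core_chase_infinite[OF assms] by blast
end
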